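(* For every $r\ge0$, the tuple $(q_{r,n}1_n)_{n\ge0}$ is an element of the center $Z(\mathcal{NB}_t)$, i.e. $q_{r,m}1_m\circ f=f\circ q_{r,n}1_n$ for all $m,n\ge0$ and all $f\in\mathrm{Hom}_{\mathcal{NB}_t}(B^{\star n},B^{\star m})$.
   Context: Let $\Bbbk$ be a field of characteristic $\neq2$, $t\in\{0,1\}$, and let $\mathcal{NB}_t$ be the nil-Brauer category: the strict graded $\Bbbk$-linear monoidal category (tensor $\star$, unit $\mathbb1$, composition $\circ$) generated by an object $B$ and morphisms $x:B\to B$ (degree 2), $\tau:B\star B\to B\star B$ (degree $-2$), $\cap:B\star B\to\mathbb1$, $\cup:\mathbb1\to B\star B$ (degree 0), with relations ($1=1_B$): $\tau\circ\tau=0$; $(\tau\star1)\circ(1\star\tau)\circ(\tau\star1)=(1\star\tau)\circ(\tau\star1)\circ(1\star\tau)$; $\cap\circ\cup=t1_{\mathbb1}$; $(\cap\star1)\circ(1\star\cup)=1=(1\star\cap)\circ(\cup\star1)$; $\cap\circ\tau=0$; $(1\star\cap)\circ(\tau\star1)=(\cap\star1)\circ(1\star\tau)$; $(x\star1)\circ\tau-\tau\circ(1\star x)=1\star1-\cup\circ\cap$; $\cap\circ(1\star x)=-\cap\circ(x\star1)$. For a polynomial $g\in\Bbbk[x_1,\dots,x_n]$, $g1_n$ denotes the endomorphism of $B^{\star n}$ obtained by substituting $x_i\mapsto 1^{\star(i-1)}\star x\star1^{\star(n-i)}$ (these commute). The symmetric polynomials $q_{r,n}\in\Bbbk[x_1,\dots,x_n]^{S_n}$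 are defined by $\sum_{r\ge0}u^{-r}q_{r,n}=\prod_{i=1}^n\frac{u+x_i}{u-x_i}\in\Bbbk[x_1,\dots,x_n][\![u^{-1}]\!]$. The center of a category is the algebra of endomorphisms of its identity functor. *)

theory Defs
  imports "HOL-Library.Poly_Mapping" "HOL-Computational_Algebra.Formal_Power_Series"
begin

text \<open>Objects of NB_t are the tensor powers B^n, identified with n :: nat (the unit is 0).
  Morphisms are formal expressions built from the generators, identities, composition,
  tensor product and the k-linear structure, modulo the least congruence generated by the
  axioms of a strict k-linear monoidal category and the defining relations of NB_t.
  Cmp g f denotes g composed after f.\<close>

datatype 'k nbmor =
    Idn nat
  | X
  | Tau
  | Cap
  | Cup
  | Cmp "'k nbmor" "'k nbmor"
  | Tns "'k nbmor" "'k nbmor"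
  | Zero nat nat
  | Add "'k nbmor" "'k nbmor"
  | Sm 'k "'k nbmor"

text \<open>Typing: Some (source, target).\<close>
fun nbtyp :: "'k nbmor \<Rightarrow> (nat \<times> nat) option" where
  "nbtyp (Idn n) = Some (n, n)"
| "nbtyp X = Some (1, 1)"
| "nbtyp Tau = Some (2, 2)"
| "nbtyp Cap = Some (2, 0)"
| "nbtyp Cup = Some (0, 2)"
| "nbtyp (Cmp g f) =
     (case (nbtyp f, nbtyp g) of
        (Some (a, b), Some (b', c)) \<Rightarrow> (if b = b' then Some (a, c) else None)
      | _ \<Rightarrow> None)"
| "nbtyp (Tns f g) =
     (case (nbtyp f, nbtyp g) of
        (Some (a, b), Some (a', b')) \<Rightarrow> Some (a + a', b + b')
      | _ \<Rightarrow> None)"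
| "nbtyp (Zero n m) = Some (n, m)"
| "nbtyp (Add f g) = (if nbtyp f = nbtyp g then nbtyp f else None)"
| "nbtyp (Sm c f) = nbtyp f"

definition nbhom :: "nat \<Rightarrow> nat \<Rightarrow> 'k nbmor \<Rightarrow> bool" where
  "nbhom n m f \<longleftrightarrow> nbtyp f = Some (n, m)"

inductive nbeq :: "'k::field \<Rightarrow> 'k nbmor \<Rightarrow> 'k nbmor \<Rightarrow> bool" for t :: 'k where
  refl: "nbeq t f f"
| sym: "nbeq t f g \<Longrightarrow> nbeq t g f"
| trans: "nbeq t f g \<Longrightarrow> nbeq t g h \<Longrightarrow> nbeq t f h"
| cong_Cmp: "nbeq t g g' \<Longrightarrow> nbeq t f f' \<Longrightarrow> nbeq t (Cmp g f) (Cmp g' f')"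
| cong_Tns: "nbeq t f f' \<Longrightarrow> nbeq t g g' \<Longrightarrow> nbeq t (Tns f g) (Tns f' g')"
| cong_Add: "nbeq t f f' \<Longrightarrow> nbeq t g g' \<Longrightarrow> nbeq t (Add f g) (Add f' g')"
| cong_Sm: "nbeq t f f' \<Longrightarrow> nbeq t (Sm c f) (Sm c f')"
| add_assoc: "nbhom n m f \<Longrightarrow> nbhom n m g \<Longrightarrow> nbhom n m h \<Longrightarrow>
     nbeq t (Add (Add f g) h) (Add f (Add g h))"
| add_comm: "nbhom n m f \<Longrightarrow> nbhom n m g \<Longrightarrow> nbeq t (Add f g) (Add g f)"
| add_zero: "nbhom n m f \<Longrightarrow> nbeq t (Add f (Zero n m)) f"
| add_neg: "nbhom n m f \<Longrightarrow> nbeq t (Add f (Sm (-1) f)) (Zero n m)"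
| sm_one: "nbhom n m f \<Longrightarrow> nbeq t (Sm 1 f) f"
| sm_sm: "nbhom n m f \<Longrightarrow> nbeq t (Sm a (Sm b f)) (Sm (a * b) f)"
| sm_add_scalar: "nbhom n m f \<Longrightarrow> nbeq t (Sm (a + b) f) (Add (Sm a f) (Sm b f))"
| sm_add: "nbhom n m f \<Longrightarrow> nbhom n m g \<Longrightarrow> nbeq t (Sm a (Add f g)) (Add (Sm a f) (Sm a g))"
| cmp_add_r: "nbhom n m f \<Longrightarrow> nbhom n m g \<Longrightarrow> nbhom m p h \<Longrightarrow>
     nbeq t (Cmp h (Add f g)) (Add (Cmp h f) (Cmp h g))"
| cmp_add_l: "nbhom n m f \<Longrightarrow> nbhom n m g \<Longrightarrow> nbhom p n h \<Longrightarrow>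
     nbeq t (Cmp (Add f g) h) (Add (Cmp f h) (Cmp g h))"
| cmp_sm_r: "nbhom n m f \<Longrightarrow> nbhom m p h \<Longrightarrow> nbeq t (Cmp h (Sm a f)) (Sm a (Cmp h f))"
| cmp_sm_l: "nbhom n m f \<Longrightarrow> nbhom p n h \<Longrightarrow> nbeq t (Cmp (Sm a f) h) (Sm a (Cmp f h))"
| tns_add_r: "nbhom n m f \<Longrightarrow> nbhom n m g \<Longrightarrow> nbhom p q h \<Longrightarrow>
     nbeq t (Tns h (Add f g)) (Add (Tns h f) (Tns h g))"
| tns_add_l: "nbhom n m f \<Longrightarrow> nbhom n m g \<Longrightarrow> nbhom p q h \<Longrightarrow>
     nbeq t (Tns (Add f g) h) (Add (Tns f h) (Tns g h))"
| tns_sm_r: "nbhom n m f \<Longrightarrow> nbhom p q h \<Longrightarrow> nbeq t (Tns h (Sm a f)) (Sm a (Tns h f))"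
| tns_sm_l: "nbhom n m f \<Longrightarrow> nbhom p q h \<Longrightarrow> nbeq t (Tns (Sm a f) h) (Sm a (Tns f h))"
| cmp_assoc: "nbhom n m f \<Longrightarrow> nbhom m p g \<Longrightarrow> nbhom p q h \<Longrightarrow>
     nbeq t (Cmp (Cmp h g) f) (Cmp h (Cmp g f))"
| cmp_id_l: "nbhom n m f \<Longrightarrow> nbeq t (Cmp (Idn m) f) f"
| cmp_id_r: "nbhom n m f \<Longrightarrow> nbeq t (Cmp f (Idn n)) f"
| tns_assoc: "nbhom n m f \<Longrightarrow> nbhom n' m' g \<Longrightarrow> nbhom n'' m'' h \<Longrightarrow>
     nbeq t (Tns (Tns f g) h) (Tns f (Tns g h))"
| tns_unit_l: "nbhom n m f \<Longrightarrow> nbeq t (Tns (Idn 0) f) f"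
| tns_unit_r: "nbhom n m f \<Longrightarrow> nbeq t (Tns f (Idn 0)) f"
| tns_id: "nbeq t (Tns (Idn a) (Idn b)) (Idn (a + b))"
| interchange: "nbhom n m f \<Longrightarrow> nbhom m p g \<Longrightarrow> nbhom n' m' f' \<Longrightarrow> nbhom m' p' g' \<Longrightarrow>
     nbeq t (Tns (Cmp g f) (Cmp g' f')) (Cmp (Tns g g') (Tns f f'))"
| rel_nil: "nbeq t (Cmp Tau Tau) (Zero 2 2)"
| rel_braid: "nbeq t (Cmp (Tns Tau (Idn 1)) (Cmp (Tns (Idn 1) Tau) (Tns Tau (Idn 1))))
                     (Cmp (Tns (Idn 1) Tau) (Cmp (Tns Tau (Idn 1)) (Tns (Idn 1) Tau)))"
| rel_bubble: "nbeq t (Cmp Cap Cup) (Sm t (Idn 0))"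
| rel_zigzag1: "nbeq t (Cmp (Tns Cap (Idn 1)) (Tns (Idn 1) Cup)) (Idn 1)"
| rel_zigzag2: "nbeq t (Cmp (Tns (Idn 1) Cap) (Tns Cup (Idn 1))) (Idn 1)"
| rel_cap_tau: "nbeq t (Cmp Cap Tau) (Zero 2 0)"
| rel_pitchfork: "nbeq t (Cmp (Tns (Idn 1) Cap) (Tns Tau (Idn 1)))
                         (Cmp (Tns Cap (Idn 1)) (Tns (Idn 1) Tau))"
| rel_dot_slide: "nbeq t (Add (Cmp (Tns X (Idn 1)) Tau) (Sm (-1) (Cmp Tau (Tns (Idn 1) X))))
                         (Add (Tns (Idn 1) (Idn 1)) (Sm (-1) (Cmp Cup Cap)))"
| rel_cap_dot: "nbeq t (Cmp Cap (Tns (Idn 1) X)) (Sm (-1) (Cmp Cap (Tns X (Idn 1))))"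

text \<open>Multivariate polynomials over k in variables x_0, x_1, ... (the paper's x_1, x_2, ...),
  as finitely supported maps from monomials (exponent vectors) to coefficients.\<close>
type_synonym 'k mpoly = "(nat \<Rightarrow>\<^sub>0 nat) \<Rightarrow>\<^sub>0 'k"

definition mvar :: "nat \<Rightarrow> 'k::comm_ring_1 mpoly" where
  "mvar i = Poly_Mapping.single (Poly_Mapping.single i 1) 1"

text \<open>x_i acting on B^n (0-indexed, i < n): 1^(i) * x * 1^(n-i-1).\<close>
definition xact :: "nat \<Rightarrow> nat \<Rightarrow> 'k nbmor" where
  "xact n i = Tns (Tns (Idn i) X) (Idn (n - Suc i))"

fun xpow :: "nat \<Rightarrow> nat \<Rightarrow> nat \<Rightarrow> 'k nbmor" where
  "xpow n i 0 = Idn n"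
| "xpow n i (Suc k) = Cmp (xact n i) (xpow n i k)"

definition monact :: "nat \<Rightarrow> (nat \<Rightarrow>\<^sub>0 nat) \<Rightarrow> 'k nbmor" where
  "monact n mo = foldr (\<lambda>i acc. Cmp (xpow n i (Poly_Mapping.lookup mo i)) acc) [0..<n] (Idn n)"

text \<open>g 1_n for a polynomial g in the variables x_0..x_(n-1).\<close>
definition polyact :: "nat \<Rightarrow> 'k::zero mpoly \<Rightarrow> 'k nbmor" where
  "polyact n g = foldr (\<lambda>mo acc. Add (Sm (Poly_Mapping.lookup g mo) (monact n mo)) acc)
                        (sorted_list_of_set (Poly_Mapping.keys g)) (Zero n n)"

text \<open>With v = u^{-1}, (u+x)/(u-x) = (1+xv)/(1-xv); the generating series
  sum_r v^r q_{r,n} is the unique power series Q in k[x][[v]] with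
  Q * prod_i (1 - x_i v) = prod_i (1 + x_i v).\<close>
definition qgen :: "nat \<Rightarrow> 'k::field mpoly fps" where
  "qgen n = (THE Q. Q * (\<Prod>i<n. 1 - fps_const (mvar i) * fps_X)
                    = (\<Prod>i<n. 1 + fps_const (mvar i) * fps_X))"

definition qpoly :: "nat \<Rightarrow> nat \<Rightarrow> 'k::field mpoly" where
  "qpoly r n = fps_nth (qgen n) r"

end

theory Submission
  imports Defs
begin

text \<open>Write \<open>Q r n = q\<^sub>r\<^sub>,\<^sub>n 1\<^sub>n\<close> (\<open>qQ r n\<close> below). Since
  \<open>(u + x)/(u - x) = 1 + 2 \<Sum>k\<ge>1. x^k u^-k\<close>, these morphisms satisfy
  \<open>Q r (n + 1) = \<Sum>a\<le>r. \<kappa>(r - a) Q a n \<star> x^(r-a)\<close> with \<open>\<kappa> 0 = 1\<close> and \<open>\<kappa> k = 2\<close> otherwise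
  (\<open>qcoeff\<close>), and consequently \<open>Q r (n + k) = \<Sum>a\<le>r. Q a n \<star> Q (r - a) k\<close>. By induction on
  morphism expressions, centrality therefore reduces to commuting \<open>Q r\<close> past the generators,
  which is trivial for the dot. On two strands \<open>Q r 2\<close> is the symmetric polynomial
  \<open>\<Sum>a\<le>r. \<kappa> a \<kappa>(r - a) x\<^sub>1^a x\<^sub>2^(r-a)\<close>; multiplying its generating series by
  \<open>(1 - x\<^sub>1 v)(1 - x\<^sub>2 v)\<close> gives \<open>Q 1 2 = 2 e\<^sub>1\<close>, \<open>Q 2 2 = e\<^sub>1 Q 1 2\<close> and
  \<open>Q r 2 = e\<^sub>1 Q (r-1) 2 - e\<^sub>2 Q (r-2) 2\<close> for \<open>r \<ge> 3\<close>. The dot slide relation, and its rotation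
  by a cap and a cup, show that \<open>\<tau>\<close> commutes with \<open>e\<^sub>1\<close>, and with \<open>e\<^sub>2\<close> up to terms involving
  \<open>\<union>\<circ>\<inter>\<close>; moreover the cap and the cup both annihilate \<open>e\<^sub>1\<close>. An induction on \<open>r\<close> then shows
  that for \<open>r \<ge> 1\<close> the morphism \<open>Q r 2\<close> commutes with \<open>\<tau>\<close> and is annihilated by the cap and
  the cup, as required by \<open>Q r 0 = 0\<close>.\<close>

section \<open>Morphisms modulo the relations\<close>

lemma nbeq_nbtyp: "nbeq t f g \<Longrightarrow> nbtyp f = nbtyp g"
  by (induction rule: nbeq.induct) (auto simp: nbhom_def split: option.splits prod.splits)

text \<open>We therefore work modulo the relations that hold for every \<open>t\<close> at
  once, which gives a quotient type independent of \<open>t\<close>.\<close>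

definition nbeq_all :: "'k::field nbmor \<Rightarrow> 'k nbmor \<Rightarrow> bool" where
  "nbeq_all f g \<longleftrightarrow> (\<forall>t. nbeq t f g)"

lemma equivp_nbeq_all: "equivp nbeq_all"
  unfolding nbeq_all_def
  by (rule equivpI) (auto simp: reflp_def symp_def transp_def intro: nbeq.intros)

quotient_type (overloaded) 'k mor = "'k::field nbmor" / nbeq_all
  by (rule equivp_nbeq_all)

lift_definition qcmp :: "'k::field mor \<Rightarrow> 'k mor \<Rightarrow> 'k mor" (infixr "\<cdot>" 70) is Cmp
  by (auto simp: nbeq_all_def intro: nbeq.cong_Cmp)

lift_definition qtns :: "'k::field mor \<Rightarrow> 'k mor \<Rightarrow> 'k mor" (infixr "\<otimes>" 75) is Tns
  by (auto simp: nbeq_all_def intro: nbeq.cong_Tns)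

lift_definition qadd :: "'k::field mor \<Rightarrow> 'k mor \<Rightarrow> 'k mor" (infixl "\<oplus>" 65) is Add
  by (auto simp: nbeq_all_def intro: nbeq.cong_Add)

lift_definition qsm :: "'k::field \<Rightarrow> 'k mor \<Rightarrow> 'k mor" (infixr "\<odot>" 72) is Sm
  by (auto simp: nbeq_all_def intro: nbeq.cong_Sm)

lift_definition qId :: "nat \<Rightarrow> 'k::field mor" is Idn .

lift_definition qX :: "'k::field mor" is X .

lift_definition qTau :: "'k::field mor" is Tau .

lift_definition qCap :: "'k::field mor" is Cap .

lift_definition qCup :: "'k::field mor" is Cup .

lift_definition qZero :: "nat \<Rightarrow> nat \<Rightarrow> 'k::field mor" is Zero .

lift_definition qtyp :: "'k::field mor \<Rightarrow> (nat \<times> nat) option" is nbtyp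
  by (auto simp: nbeq_all_def dest: nbeq_nbtyp)

abbreviation qhom :: "nat \<Rightarrow> nat \<Rightarrow> 'k::field mor \<Rightarrow> bool" where
  "qhom n m f \<equiv> qtyp f = Some (n, m)"

lemma abs_mor_simps:
  "abs_mor (Cmp g f) = abs_mor g \<cdot> abs_mor f"
  "abs_mor (Tns f g) = abs_mor f \<otimes> abs_mor g"
  "abs_mor (Add f g) = abs_mor f \<oplus> abs_mor g"
  "abs_mor (Sm c f) = c \<odot> abs_mor f"
  "abs_mor (Idn n) = qId n"
  "abs_mor X = qX"
  "abs_mor Tau = qTau"
  "abs_mor Cap = qCap"
  "abs_mor Cup = qCup"
  "abs_mor (Zero n m) = qZero n m"
  by (simp_all add: qcmp.abs_eq qtns.abs_eq qadd.abs_eq qsm.abs_eq qId.abs_eq qX.abs_eq qTau.abs_eq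
      qCap.abs_eq qCup.abs_eq qZero.abs_eq)

lemma qtyp_abs_mor: "qtyp (abs_mor f) = nbtyp f"
  by (simp add: qtyp.abs_eq)

lemma qtyp_simps [simp]:
  "qtyp (qId n) = Some (n, n)"
  "qtyp qX = Some (1, 1)"
  "qtyp qTau = Some (2, 2)"
  "qtyp qCap = Some (2, 0)"
  "qtyp qCup = Some (0, 2)"
  "qtyp (qZero n m) = Some (n, m)"
  "qtyp (c \<odot> f) = qtyp f"
  by (transfer, simp)+

lemma qtyp_cmp: "qtyp f = Some (n, m) \<Longrightarrow> qtyp g = Some (m, p) \<Longrightarrow> qtyp (g \<cdot> f) = Some (n, p)"
  by transfer simp

lemma qtyp_tns: "qtyp f = Some (n, m) \<Longrightarrow> qtyp g = Some (n', m') \<Longrightarrow> qtyp (f \<otimes> g) = Some (n + n', m + m')"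
  by transfer simp

lemma qtyp_add: "qtyp f = Some (n, m) \<Longrightarrow> qtyp g = Some (n, m) \<Longrightarrow> qtyp (f \<oplus> g) = Some (n, m)"
  by transfer simp

lemma qtyp_cmp_eq: "qtyp (g \<cdot> f) = (case (qtyp f, qtyp g) of
        (Some (a, b), Some (b', c)) \<Rightarrow> (if b = b' then Some (a, c) else None) | _ \<Rightarrow> None)"
  by transfer simp

lemma qtyp_tns_eq: "qtyp (f \<otimes> g) = (case (qtyp f, qtyp g) of
        (Some (a, b), Some (a', b')) \<Rightarrow> Some (a + a', b + b') | _ \<Rightarrow> None)"
  by transfer simp

lemma qtyp_add_eq: "qtyp (f \<oplus> g) = (if qtyp f = qtyp g then qtyp f else None)"
  by transfer simp

lemmas qtyp_eqs = qtyp_cmp_eq qtyp_tns_eq qtyp_add_eq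

lemma q_add_assoc: "qhom n m f \<Longrightarrow> qhom n m g \<Longrightarrow> qhom n m h \<Longrightarrow> (f \<oplus> g) \<oplus> h = f \<oplus> (g \<oplus> h)"
  by transfer (auto simp: nbeq_all_def nbhom_def intro: nbeq.add_assoc)

lemma q_add_comm: "qhom n m f \<Longrightarrow> qhom n m g \<Longrightarrow> f \<oplus> g = g \<oplus> f"
  by transfer (auto simp: nbeq_all_def nbhom_def intro: nbeq.add_comm)

lemma q_add_zero: "qhom n m f \<Longrightarrow> f \<oplus> qZero n m = f"
  by transfer (auto simp: nbeq_all_def nbhom_def intro: nbeq.add_zero)

lemma q_add_neg: "qhom n m f \<Longrightarrow> f \<oplus> ((-1) \<odot> f) = qZero n m"
  by transfer (auto simp: nbeq_all_def nbhom_def intro: nbeq.add_neg)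

lemma q_sm_one: "qhom n m f \<Longrightarrow> 1 \<odot> f = f"
  by transfer (auto simp: nbeq_all_def nbhom_def intro: nbeq.sm_one)

lemma q_sm_sm: "qhom n m f \<Longrightarrow> a \<odot> (b \<odot> f) = (a * b) \<odot> f"
  by transfer (auto simp: nbeq_all_def nbhom_def intro: nbeq.sm_sm)

lemma q_sm_add_scalar: "qhom n m f \<Longrightarrow> (a + b) \<odot> f = (a \<odot> f) \<oplus> (b \<odot> f)"
  by transfer (auto simp: nbeq_all_def nbhom_def intro: nbeq.sm_add_scalar)

lemma q_sm_add: "qhom n m f \<Longrightarrow> qhom n m g \<Longrightarrow> a \<odot> (f \<oplus> g) = (a \<odot> f) \<oplus> (a \<odot> g)"
  by transfer (auto simp: nbeq_all_def nbhom_def intro: nbeq.sm_add)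

lemma q_cmp_add_r: "qhom n m f \<Longrightarrow> qhom n m g \<Longrightarrow> qhom m p h \<Longrightarrow> h \<cdot> (f \<oplus> g) = (h \<cdot> f) \<oplus> (h \<cdot> g)"
  by transfer (auto simp: nbeq_all_def nbhom_def intro: nbeq.cmp_add_r)

lemma q_cmp_add_l: "qhom n m f \<Longrightarrow> qhom n m g \<Longrightarrow> qhom p n h \<Longrightarrow> (f \<oplus> g) \<cdot> h = (f \<cdot> h) \<oplus> (g \<cdot> h)"
  by transfer (auto simp: nbeq_all_def nbhom_def intro: nbeq.cmp_add_l)

lemma q_cmp_sm_r: "qhom n m f \<Longrightarrow> qhom m p h \<Longrightarrow> h \<cdot> (a \<odot> f) = a \<odot> (h \<cdot> f)"
  by transfer (auto simp: nbeq_all_def nbhom_def intro: nbeq.cmp_sm_r)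

lemma q_cmp_sm_l: "qhom n m f \<Longrightarrow> qhom p n h \<Longrightarrow> (a \<odot> f) \<cdot> h = a \<odot> (f \<cdot> h)"
  by transfer (auto simp: nbeq_all_def nbhom_def intro: nbeq.cmp_sm_l)

lemma q_tns_add_r: "qhom n m f \<Longrightarrow> qhom n m g \<Longrightarrow> qhom p q h \<Longrightarrow> h \<otimes> (f \<oplus> g) = (h \<otimes> f) \<oplus> (h \<otimes> g)"
  by transfer (auto simp: nbeq_all_def nbhom_def intro: nbeq.tns_add_r)

lemma q_tns_add_l: "qhom n m f \<Longrightarrow> qhom n m g \<Longrightarrow> qhom p q h \<Longrightarrow> (f \<oplus> g) \<otimes> h = (f \<otimes> h) \<oplus> (g \<otimes> h)"
  by transfer (auto simp: nbeq_all_def nbhom_def intro: nbeq.tns_add_l)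

lemma q_tns_sm_r: "qhom n m f \<Longrightarrow> qhom p q h \<Longrightarrow> h \<otimes> (a \<odot> f) = a \<odot> (h \<otimes> f)"
  by transfer (auto simp: nbeq_all_def nbhom_def intro: nbeq.tns_sm_r)

lemma q_tns_sm_l: "qhom n m f \<Longrightarrow> qhom p q h \<Longrightarrow> (a \<odot> f) \<otimes> h = a \<odot> (f \<otimes> h)"
  by transfer (auto simp: nbeq_all_def nbhom_def intro: nbeq.tns_sm_l)

lemma q_cmp_assoc: "qhom n m f \<Longrightarrow> qhom m p g \<Longrightarrow> qhom p q h \<Longrightarrow> (h \<cdot> g) \<cdot> f = h \<cdot> (g \<cdot> f)"
  by transfer (auto simp: nbeq_all_def nbhom_def intro: nbeq.cmp_assoc)

lemma q_cmp_id_l: "qhom n m f \<Longrightarrow> qId m \<cdot> f = f"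
  by transfer (auto simp: nbeq_all_def nbhom_def intro: nbeq.cmp_id_l)

lemma q_cmp_id_r: "qhom n m f \<Longrightarrow> f \<cdot> qId n = f"
  by transfer (auto simp: nbeq_all_def nbhom_def intro: nbeq.cmp_id_r)

lemma q_tns_assoc: "qhom n m f \<Longrightarrow> qhom n' m' g \<Longrightarrow> qhom n'' m'' h \<Longrightarrow> (f \<otimes> g) \<otimes> h = f \<otimes> (g \<otimes> h)"
  by transfer (auto simp: nbeq_all_def nbhom_def intro: nbeq.tns_assoc)

lemma q_tns_unit_l: "qhom n m f \<Longrightarrow> qId 0 \<otimes> f = f"
  by transfer (auto simp: nbeq_all_def nbhom_def intro: nbeq.tns_unit_l)

lemma q_tns_unit_r: "qhom n m f \<Longrightarrow> f \<otimes> qId 0 = f"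
  by transfer (auto simp: nbeq_all_def nbhom_def intro: nbeq.tns_unit_r)

lemma q_tns_id: "qId a \<otimes> qId b = qId (a + b)"
  by transfer (auto simp: nbeq_all_def nbhom_def intro: nbeq.tns_id)

lemma q_interchange: "qhom n m f \<Longrightarrow> qhom m p g \<Longrightarrow> qhom n' m' f' \<Longrightarrow> qhom m' p' g' \<Longrightarrow>
     (g \<cdot> f) \<otimes> (g' \<cdot> f') = (g \<otimes> g') \<cdot> (f \<otimes> f')"
  by transfer (auto simp: nbeq_all_def nbhom_def intro: nbeq.interchange)

lemma q_zigzag1: "(qCap \<otimes> qId 1) \<cdot> (qId 1 \<otimes> qCup) = qId 1"
  by transfer (simp add: nbeq_all_def nbeq.rel_zigzag1[unfolded One_nat_def])

lemma q_zigzag2: "(qId 1 \<otimes> qCap) \<cdot> (qCup \<otimes> qId 1) = qId 1"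
  by transfer (simp add: nbeq_all_def nbeq.rel_zigzag2[unfolded One_nat_def])

lemma q_pitchfork: "(qId 1 \<otimes> qCap) \<cdot> (qTau \<otimes> qId 1) = (qCap \<otimes> qId 1) \<cdot> (qId 1 \<otimes> qTau)"
  by transfer (simp add: nbeq_all_def nbeq.rel_pitchfork[unfolded One_nat_def])

lemma q_dot_slide: "((qX \<otimes> qId 1) \<cdot> qTau) \<oplus> ((-1) \<odot> (qTau \<cdot> (qId 1 \<otimes> qX))) = (qId 1 \<otimes> qId 1) \<oplus> ((-1) \<odot> (qCup \<cdot> qCap))"
  by transfer (simp add: nbeq_all_def nbeq.rel_dot_slide[unfolded One_nat_def])

lemma q_cap_dot: "qCap \<cdot> (qId 1 \<otimes> qX) = (-1) \<odot> (qCap \<cdot> (qX \<otimes> qId 1))"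
  by transfer (simp add: nbeq_all_def nbeq.rel_cap_dot[unfolded One_nat_def])

lemma q_sm_zero: "qhom n m f \<Longrightarrow> 0 \<odot> f = qZero n m"
  using q_sm_add_scalar[of f n m 1 "-1"] by (simp add: q_sm_one q_add_neg)

lemma q_zero_add: "qhom n m f \<Longrightarrow> qZero n m \<oplus> f = f"
  by (subst q_add_comm[where n=n and m=m]) (simp_all add: q_add_zero)

lemma q_sm_qZero: "c \<odot> qZero n m = qZero n m"
  using q_sm_sm[of "qZero n m" n m c 0] by (simp add: q_sm_zero)

lemma q_cmp_qZero_l: "qhom p n h \<Longrightarrow> qZero n m \<cdot> h = qZero p m"
  using q_cmp_sm_l[of "qZero n m" n m h p 0] by (simp add: q_sm_zero qtyp_cmp)

lemma q_cmp_qZero_r: "qhom m p h \<Longrightarrow> h \<cdot> qZero n m = qZero n p"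
  using q_cmp_sm_r[of "qZero n m" n m h p 0] by (simp add: q_sm_zero qtyp_cmp)

lemma q_tns_qZero_l: "qhom p q h \<Longrightarrow> qZero n m \<otimes> h = qZero (n + p) (m + q)"
  using q_tns_sm_l[of "qZero n m" n m h p q 0] by (simp add: q_sm_zero qtyp_tns)

lemma q_tns_qZero_r: "qhom p q h \<Longrightarrow> h \<otimes> qZero n m = qZero (p + n) (q + m)"
  using q_tns_sm_r[of "qZero n m" n m h p q 0] by (simp add: q_sm_zero qtyp_tns)

lemma q_add_left_comm: "qhom n m f \<Longrightarrow> qhom n m g \<Longrightarrow> qhom n m h \<Longrightarrow> f \<oplus> (g \<oplus> h) = g \<oplus> (f \<oplus> h)"
  by (metis q_add_assoc q_add_comm)

lemma q_add_swap4: "qhom n m a \<Longrightarrow> qhom n m b \<Longrightarrow> qhom n m c \<Longrightarrow> qhom n m d \<Longrightarrow>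
   (a \<oplus> b) \<oplus> (c \<oplus> d) = (a \<oplus> c) \<oplus> (b \<oplus> d)"
  by (simp add: q_add_assoc q_add_left_comm[of b n m c] qtyp_add)

lemma q_tns_via_left: "qhom a b f \<Longrightarrow> qhom c d g \<Longrightarrow> f \<otimes> g = (qId b \<otimes> g) \<cdot> (f \<otimes> qId c)"
proof -
  assume f: "qhom a b f" and g: "qhom c d g"
  have "f \<otimes> g = (qId b \<cdot> f) \<otimes> (g \<cdot> qId c)" using f g by (simp add: q_cmp_id_l q_cmp_id_r)
  also have "\<dots> = (qId b \<otimes> g) \<cdot> (f \<otimes> qId c)" by (rule q_interchange) (simp_all add: f g)
  finally show ?thesis .
qed

lemma q_tns_via_right: "qhom a b f \<Longrightarrow> qhom c d g \<Longrightarrow> f \<otimes> g = (f \<otimes> qId d) \<cdot> (qId a \<otimes> g)"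
proof -
  assume f: "qhom a b f" and g: "qhom c d g"
  have "f \<otimes> g = (f \<cdot> qId a) \<otimes> (qId d \<cdot> g)" using f g by (simp add: q_cmp_id_l q_cmp_id_r)
  also have "\<dots> = (f \<otimes> qId d) \<cdot> (qId a \<otimes> g)" using f g by (intro q_interchange) simp_all
  finally show ?thesis .
qed

lemma q_whisker_left: "qhom n m f \<Longrightarrow> qhom m p g \<Longrightarrow> qId a \<otimes> (g \<cdot> f) = (qId a \<otimes> g) \<cdot> (qId a \<otimes> f)"
proof -
  assume f: "qhom n m f" and g: "qhom m p g"
  have "qId a \<otimes> (g \<cdot> f) = (qId a \<cdot> qId a) \<otimes> (g \<cdot> f)" by (simp add: q_cmp_id_l)
  also have "\<dots> = (qId a \<otimes> g) \<cdot> (qId a \<otimes> f)" using f g by (intro q_interchange) simp_all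
  finally show ?thesis .
qed

lemma q_whisker_right: "qhom n m f \<Longrightarrow> qhom m p g \<Longrightarrow> (g \<cdot> f) \<otimes> qId a = (g \<otimes> qId a) \<cdot> (f \<otimes> qId a)"
proof -
  assume f: "qhom n m f" and g: "qhom m p g"
  have "(g \<cdot> f) \<otimes> qId a = (g \<cdot> f) \<otimes> (qId a \<cdot> qId a)" by (simp add: q_cmp_id_l)
  also have "\<dots> = (g \<otimes> qId a) \<cdot> (f \<otimes> qId a)" using f g by (intro q_interchange) simp_all
  finally show ?thesis .
qed

lemma q_slide: "qhom n m f \<Longrightarrow> qhom p q g \<Longrightarrow> (qId m \<otimes> g) \<cdot> (f \<otimes> qId p) = (f \<otimes> qId q) \<cdot> (qId n \<otimes> g)"
  by (metis q_tns_via_left q_tns_via_right)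

lemma q_qId_tns_qId_tns: "qId a \<otimes> (qId b \<otimes> f) = qId (a + b) \<otimes> f" if "qhom n m f"
  using that by (simp add: q_tns_assoc[symmetric] q_tns_id)

lemma q_tns_qId_tns_qId: "(f \<otimes> qId a) \<otimes> qId b = f \<otimes> qId (a + b)" if "qhom n m f"
  using that by (simp add: q_tns_assoc q_tns_id)

lemma q_cmp_assoc_eq: "a \<cdot> b = c \<Longrightarrow> qhom n m r \<Longrightarrow> qhom m p b \<Longrightarrow> qhom p q a \<Longrightarrow> a \<cdot> (b \<cdot> r) = c \<cdot> r"
proof -
  assume h: "a \<cdot> b = c" "qhom n m r" "qhom m p b" "qhom p q a"
  have "a \<cdot> (b \<cdot> r) = (a \<cdot> b) \<cdot> r" using h by (intro q_cmp_assoc[symmetric]) auto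
  then show ?thesis using h by simp
qed

lemma q_cmp_assoc_eq2: "a \<cdot> b = c1 \<cdot> c2 \<Longrightarrow> qhom n m r \<Longrightarrow> qhom m p b \<Longrightarrow> qhom p q a \<Longrightarrow>
   qhom m p' c2 \<Longrightarrow> qhom p' q c1 \<Longrightarrow> a \<cdot> (b \<cdot> r) = c1 \<cdot> (c2 \<cdot> r)"
proof -
  assume h: "a \<cdot> b = c1 \<cdot> c2" "qhom n m r" "qhom m p b" "qhom p q a" "qhom m p' c2" "qhom p' q c1"
  have "a \<cdot> (b \<cdot> r) = (a \<cdot> b) \<cdot> r" using h by (intro q_cmp_assoc[symmetric]) auto
  also have "\<dots> = (c1 \<cdot> c2) \<cdot> r" using h by simp
  also have "\<dots> = c1 \<cdot> (c2 \<cdot> r)" using h by (intro q_cmp_assoc) auto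
  finally show ?thesis .
qed

section \<open>Finite sums of parallel morphisms\<close>

text \<open>Summands of the wrong type are replaced by zero, which makes the folding step total and
  left-commutative.\<close>

definition qproj :: "nat \<Rightarrow> nat \<Rightarrow> 'k::field mor \<Rightarrow> 'k mor" where
  "qproj n m a = (if qhom n m a then a else qZero n m)"

lemma qproj_typ [simp]: "qhom n m (qproj n m a)"
  by (simp add: qproj_def)

lemma qproj_id [simp]: "qhom n m a \<Longrightarrow> qproj n m a = a"
  by (simp add: qproj_def)

definition qstep :: "nat \<Rightarrow> nat \<Rightarrow> ('a \<Rightarrow> 'k::field mor) \<Rightarrow> 'a \<Rightarrow> 'k mor \<Rightarrow> 'k mor" where
  "qstep n m F x acc = qproj n m (F x) \<oplus> qproj n m acc"

lemma qstep_typ: "qhom n m (qstep n m F x acc)"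
  by (simp add: qstep_def qtyp_add)

lemma comp_fun_commute_qstep: "comp_fun_commute (qstep n m F)"
proof
  show "qstep n m F y \<circ> qstep n m F x = qstep n m F x \<circ> qstep n m F y" for x y
    by (rule ext) (simp add: qstep_def qtyp_add q_add_left_comm[where n=n and m=m])
qed

definition qsum :: "nat \<Rightarrow> nat \<Rightarrow> ('a \<Rightarrow> 'k::field mor) \<Rightarrow> 'a set \<Rightarrow> 'k mor" where
  "qsum n m F S = Finite_Set.fold (qstep n m F) (qZero n m) S"

lemma qsum_empty [simp]: "qsum n m F {} = qZero n m"
  by (simp add: qsum_def)

lemma qsum_infinite: "\<not> finite S \<Longrightarrow> qsum n m F S = qZero n m"
  by (simp add: qsum_def)

lemma qsum_insert_raw: "finite S \<Longrightarrow> x \<notin> S \<Longrightarrow> qsum n m F (insert x S) = qstep n m F x (qsum n m F S)"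
proof -
  assume a: "finite S" "x \<notin> S"
  interpret comp_fun_commute "qstep n m F" by (rule comp_fun_commute_qstep)
  show ?thesis unfolding qsum_def using a by (rule fold_insert)
qed

lemma qsum_typ [simp]: "qtyp (qsum n m F S) = Some (n, m)"
  by (induction S rule: infinite_finite_induct) (auto simp: qsum_infinite qsum_insert_raw qstep_typ)

lemma qsum_insert: "finite S \<Longrightarrow> x \<notin> S \<Longrightarrow> qhom n m (F x) \<Longrightarrow>
   qsum n m F (insert x S) = F x \<oplus> qsum n m F S"
  by (simp add: qsum_insert_raw qstep_def)

lemma qsum_cong: "(\<And>x. x \<in> S \<Longrightarrow> F x = G x) \<Longrightarrow> qsum n m F S = qsum n m G S"
  by (induction S rule: infinite_finite_induct) (auto simp: qsum_infinite qsum_insert_raw qstep_def)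

lemma qsum_single [simp]: "qhom n m (F x) \<Longrightarrow> qsum n m F {x} = F x"
  using qsum_insert[of "{}" x F n m, simplified] by (simp add: q_add_zero)

lemma qsum_qZero: "(\<And>x. x \<in> S \<Longrightarrow> F x = qZero n m) \<Longrightarrow> qsum n m F S = qZero n m"
  by (induction S rule: infinite_finite_induct) (auto simp: qsum_infinite qsum_insert q_add_zero)

lemma qsum_add: "(\<And>x. x \<in> S \<Longrightarrow> qhom n m (F x)) \<Longrightarrow> (\<And>x. x \<in> S \<Longrightarrow> qhom n m (G x)) \<Longrightarrow>
  qsum n m (\<lambda>x. F x \<oplus> G x) S = qsum n m F S \<oplus> qsum n m G S"
  by (induction S rule: infinite_finite_induct)
    (auto simp: qsum_infinite qsum_insert q_add_zero qtyp_add intro: q_add_swap4)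

lemma qsum_union: "finite A \<Longrightarrow> finite B \<Longrightarrow> A \<inter> B = {} \<Longrightarrow>
  (\<And>x. x \<in> A \<Longrightarrow> qhom n m (F x)) \<Longrightarrow>
  qsum n m F (A \<union> B) = qsum n m F A \<oplus> qsum n m F B"
proof (induction A rule: finite_induct)
  case empty
  then show ?case by (simp add: q_zero_add)
next
  case (insert x A)
  then show ?case by (simp add: qsum_insert q_add_assoc)
qed

lemma qsum_reindex: "inj_on h S \<Longrightarrow> qsum n m F (h ` S) = qsum n m (F \<circ> h) S"
  by (induction S rule: infinite_finite_induct)
    (auto simp: qsum_infinite qsum_insert_raw qstep_def finite_image_iff)

lemma qsum_cmp_l: "(\<And>x. x \<in> S \<Longrightarrow> qhom n m (F x)) \<Longrightarrow> qhom m p g \<Longrightarrow>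
  g \<cdot> qsum n m F S = qsum n p (\<lambda>x. g \<cdot> F x) S"
  by (induction S rule: infinite_finite_induct)
    (auto simp: qsum_infinite qsum_insert q_cmp_qZero_r q_cmp_add_r qtyp_cmp)

lemma qsum_cmp_r: "(\<And>x. x \<in> S \<Longrightarrow> qhom m p (F x)) \<Longrightarrow> qhom n m g \<Longrightarrow>
  qsum m p F S \<cdot> g = qsum n p (\<lambda>x. F x \<cdot> g) S"
  by (induction S rule: infinite_finite_induct)
    (auto simp: qsum_infinite qsum_insert q_cmp_qZero_l q_cmp_add_l qtyp_cmp)

lemma qsum_tns_l: "(\<And>x. x \<in> S \<Longrightarrow> qhom n m (F x)) \<Longrightarrow> qhom p q g \<Longrightarrow>
  g \<otimes> qsum n m F S = qsum (p + n) (q + m) (\<lambda>x. g \<otimes> F x) S"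
  by (induction S rule: infinite_finite_induct)
    (auto simp: qsum_infinite qsum_insert q_tns_qZero_r q_tns_add_r qtyp_tns)

lemma qsum_tns_r: "(\<And>x. x \<in> S \<Longrightarrow> qhom n m (F x)) \<Longrightarrow> qhom p q g \<Longrightarrow>
  qsum n m F S \<otimes> g = qsum (n + p) (m + q) (\<lambda>x. F x \<otimes> g) S"
  by (induction S rule: infinite_finite_induct)
    (auto simp: qsum_infinite qsum_insert q_tns_qZero_l q_tns_add_l qtyp_tns)

lemma qsum_sm: "(\<And>x. x \<in> S \<Longrightarrow> qhom n m (F x)) \<Longrightarrow> c \<odot> qsum n m F S = qsum n m (\<lambda>x. c \<odot> F x) S"
  by (induction S rule: infinite_finite_induct) (auto simp: qsum_infinite qsum_insert q_sm_qZero q_sm_add)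

lemma qsum_Sigma: "finite A \<Longrightarrow> (\<And>x. x \<in> A \<Longrightarrow> finite (B x)) \<Longrightarrow>
  (\<And>x y. x \<in> A \<Longrightarrow> y \<in> B x \<Longrightarrow> qhom n m (F x y)) \<Longrightarrow>
  qsum n m (\<lambda>x. qsum n m (F x) (B x)) A = qsum n m (\<lambda>(x, y). F x y) (Sigma A B)"
proof (induction A rule: finite_induct)
  case empty
  then show ?case by simp
next
  case (insert a A)
  have eq: "Sigma (insert a A) B = ((\<lambda>y. (a, y)) ` B a) \<union> Sigma A B" by auto
  have "qsum n m (\<lambda>(x, y). F x y) (Sigma (insert a A) B)
       = qsum n m (\<lambda>(x, y). F x y) ((\<lambda>y. (a, y)) ` B a) \<oplus> qsum n m (\<lambda>(x, y). F x y) (Sigma A B)"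
    unfolding eq using insert by (intro qsum_union) auto
  also have "qsum n m (\<lambda>(x, y). F x y) ((\<lambda>y. (a, y)) ` B a) = qsum n m (F a) (B a)"
    by (subst qsum_reindex) (auto simp: inj_on_def comp_def)
  finally show ?case using insert by (simp add: qsum_insert)
qed

lemma qsum_swap: "finite A \<Longrightarrow> finite B \<Longrightarrow> (\<And>x y. x \<in> A \<Longrightarrow> y \<in> B \<Longrightarrow> qhom n m (F x y)) \<Longrightarrow>
  qsum n m (\<lambda>x. qsum n m (F x) B) A = qsum n m (\<lambda>y. qsum n m (\<lambda>x. F x y) A) B"
proof -
  assume fin: "finite A" "finite B" and ty: "\<And>x y. x \<in> A \<Longrightarrow> y \<in> B \<Longrightarrow> qhom n m (F x y)"
  have "qsum n m (\<lambda>x. qsum n m (F x) B) A = qsum n m (\<lambda>(x, y). F x y) (A \<times> B)"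
    using fin ty by (intro qsum_Sigma) auto
  also have "A \<times> B = (\<lambda>(y, x). (x, y)) ` (B \<times> A)" by auto
  also have "qsum n m (\<lambda>(x, y). F x y) \<dots> = qsum n m (\<lambda>(y, x). F x y) (B \<times> A)"
    by (subst qsum_reindex) (auto simp: inj_on_def comp_def intro!: qsum_cong)
  also have "\<dots> = qsum n m (\<lambda>y. qsum n m (\<lambda>x. F x y) A) B"
    using fin ty by (intro qsum_Sigma[symmetric]) auto
  finally show ?thesis .
qed

lemma qsum_delta: "finite S \<Longrightarrow> a \<in> S \<Longrightarrow> qhom n m (F a) \<Longrightarrow>
   qsum n m (\<lambda>x. if x = a then F x else qZero n m) S = F a"
proof -
  assume fin: "finite S" and a: "a \<in> S" and ty: "qhom n m (F a)"
  have "S = insert a (S - {a})" using a by auto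
  then have "qsum n m (\<lambda>x. if x = a then F x else qZero n m) S
      = qsum n m (\<lambda>x. if x = a then F x else qZero n m) (insert a (S - {a}))" by simp
  also have "\<dots> = F a \<oplus> qsum n m (\<lambda>x. if x = a then F x else qZero n m) (S - {a})"
    using fin ty by (subst qsum_insert) auto
  also have "qsum n m (\<lambda>x. if x = a then F x else qZero n m) (S - {a}) = qZero n m"
    by (rule qsum_qZero) auto
  finally show ?thesis using ty by (simp add: q_add_zero)
qed

lemma qsum_foldr: "distinct xs \<Longrightarrow> (\<And>x. x \<in> set xs \<Longrightarrow> qhom n m (F x)) \<Longrightarrow>
  foldr (\<lambda>x acc. F x \<oplus> acc) xs (qZero n m) = qsum n m F (set xs)"
  by (induction xs) (auto simp: qsum_insert)

lemma qsum_mono_neutral: "finite T \<Longrightarrow> S \<subseteq> T \<Longrightarrow> (\<And>x. x \<in> T - S \<Longrightarrow> F x = qZero n m) \<Longrightarrow>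
   (\<And>x. x \<in> S \<Longrightarrow> qhom n m (F x)) \<Longrightarrow> qsum n m F T = qsum n m F S"
proof -
  assume a: "finite T" "S \<subseteq> T" "\<And>x. x \<in> T - S \<Longrightarrow> F x = qZero n m" "\<And>x. x \<in> S \<Longrightarrow> qhom n m (F x)"
  have eq: "T = S \<union> (T - S)" using a by auto
  have "qsum n m F T = qsum n m F S \<oplus> qsum n m F (T - S)"
    using a by (subst eq, intro qsum_union) (auto intro: finite_subset)
  also have "qsum n m F (T - S) = qZero n m" using a by (intro qsum_qZero) auto
  finally show ?thesis by (simp add: q_add_zero)
qed

lemma qsum_triangle:
  fixes r :: nat
  assumes "\<And>a c. qhom n m (G a c)"
  shows "qsum n m (\<lambda>c. qsum n m (\<lambda>a. G a c) {..c}) {..r}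
       = qsum n m (\<lambda>a. qsum n m (\<lambda>b. G a (a + b)) {..r - a}) {..r}"
proof -
  let ?G = "\<lambda>a c. if a \<le> c then G a c else qZero n m"
  have "qsum n m (\<lambda>c. qsum n m (\<lambda>a. G a c) {..c}) {..r}
      = qsum n m (\<lambda>c. qsum n m (\<lambda>a. ?G a c) {..r}) {..r}"
  proof (rule qsum_cong)
    fix c assume "c \<in> {..r}"
    then have "qsum n m (\<lambda>a. ?G a c) {..r} = qsum n m (\<lambda>a. ?G a c) {..c}"
      using assms by (intro qsum_mono_neutral) auto
    also have "\<dots> = qsum n m (\<lambda>a. G a c) {..c}"
      by (rule qsum_cong) auto
    finally show "qsum n m (\<lambda>a. G a c) {..c} = qsum n m (\<lambda>a. ?G a c) {..r}"
      by simp
  qed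
  also have "\<dots> = qsum n m (\<lambda>a. qsum n m (\<lambda>c. ?G a c) {..r}) {..r}"
    using assms by (intro qsum_swap) auto
  also have "\<dots> = qsum n m (\<lambda>a. qsum n m (\<lambda>b. G a (a + b)) {..r - a}) {..r}"
  proof (rule qsum_cong)
    fix a assume a: "a \<in> {..r}"
    have "qsum n m (\<lambda>c. ?G a c) {..r} = qsum n m (\<lambda>c. ?G a c) {a..r}"
      using assms a by (intro qsum_mono_neutral) auto
    also have "\<dots> = qsum n m (G a) {a..r}"
      by (rule qsum_cong) auto
    also have "{a..r} = (+) a ` {..r - a}"
      using a by (simp add: atLeast0AtMost[symmetric])
    also have "qsum n m (G a) \<dots> = qsum n m (\<lambda>b. G a (a + b)) {..r - a}"
      by (subst qsum_reindex) (auto simp: comp_def)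
    finally show "qsum n m (\<lambda>c. ?G a c) {..r} = qsum n m (\<lambda>b. G a (a + b)) {..r - a}" .
  qed
  finally show ?thesis .
qed

section \<open>Dots and the action of polynomials\<close>

declare One_nat_def [simp del]

fun qXpow :: "nat \<Rightarrow> 'k::field mor" where
  "qXpow 0 = qId 1"
| "qXpow (Suc k) = qX \<cdot> qXpow k"

lemma qXpow_typ [simp]: "qtyp (qXpow k) = Some (1, 1)"
  by (induction k) (auto intro: qtyp_cmp)

lemma qXpow_add: "qXpow a \<cdot> qXpow b = qXpow (a + b)"
  by (induction a) (simp_all add: q_cmp_id_l q_cmp_assoc[where n=1 and m=1 and p=1 and q=1])

lemma qX_cmp_qId [simp]: "qX \<cdot> qId 1 = qX"
  by (rule q_cmp_id_r) simp

lemma qXpow_one: "qXpow 1 = qX"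
  using qX_cmp_qId by (simp add: One_nat_def)

lemma qX_qXpow_commute: "qX \<cdot> qXpow k = qXpow k \<cdot> qX"
  by (metis qXpow_add qXpow_one add.commute)

lemma abs_mor_xact: "abs_mor (xact n i) = (qId i \<otimes> qX) \<otimes> qId (n - Suc i)"
  by (simp add: xact_def abs_mor_simps)

lemma abs_mor_xpow:
  "i < n \<Longrightarrow> abs_mor (xpow n i k :: 'k::field nbmor) = (qId i \<otimes> qXpow k) \<otimes> qId (n - Suc i)"
proof (induction k)
  case 0
  then show ?case by (simp add: abs_mor_simps q_tns_id)
next
  case (Suc k)
  have "abs_mor (xpow n i (Suc k) :: 'k nbmor)
      = ((qId i \<otimes> qX) \<otimes> qId (n - Suc i)) \<cdot> ((qId i \<otimes> qXpow k) \<otimes> qId (n - Suc i))"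
    by (simp only: xpow.simps abs_mor_simps abs_mor_xact Suc.IH[OF Suc.prems])
  also have "\<dots> = ((qId i \<otimes> qX) \<cdot> (qId i \<otimes> qXpow k)) \<otimes> (qId (n - Suc i) \<cdot> qId (n - Suc i))"
    by (rule q_interchange[symmetric]) (auto intro!: qtyp_tns)
  also have "\<dots> = (qId i \<otimes> qXpow (Suc k)) \<otimes> qId (n - Suc i)"
    by (simp add: q_interchange[symmetric] q_cmp_id_l)
  finally show ?case .
qed

lemma qtyp_xpow: "i < n \<Longrightarrow> qhom n n (abs_mor (xpow n i k))"
  by (simp add: abs_mor_xpow qtyp_tns)

lemma abs_mor_xpow_Suc:
  "i < n \<Longrightarrow> abs_mor (xpow (Suc n) i k :: 'k::field nbmor) = abs_mor (xpow n i k) \<otimes> qId 1"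
proof -
  assume i: "i < n"
  have "abs_mor (xpow (Suc n) i k :: 'k nbmor) = (qId i \<otimes> qXpow k) \<otimes> (qId (n - Suc i) \<otimes> qId 1)"
    using i by (simp add: abs_mor_xpow q_tns_id Suc_diff_Suc)
  also have "\<dots> = ((qId i \<otimes> qXpow k) \<otimes> qId (n - Suc i)) \<otimes> qId 1"
    by (rule q_tns_assoc[symmetric]) (auto intro: qtyp_tns)
  also have "\<dots> = abs_mor (xpow n i k) \<otimes> qId 1"
    using i by (simp add: abs_mor_xpow)
  finally show ?thesis .
qed

lemma abs_mor_xpow_last: "abs_mor (xpow (Suc n) n k) = qId n \<otimes> qXpow k"
  by (simp add: abs_mor_xpow q_tns_unit_r qtyp_tns)

definition xpow_fold :: "nat \<Rightarrow> (nat \<Rightarrow>\<^sub>0 nat) \<Rightarrow> nat list \<Rightarrow> 'k::field mor \<Rightarrow> 'k mor" where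
  "xpow_fold n mo ixs base =
     foldr (\<lambda>i acc. abs_mor (xpow n i (Poly_Mapping.lookup mo i)) \<cdot> acc) ixs base"

lemma qtyp_xpow_fold:
  "\<forall>i\<in>set ixs. i < n \<Longrightarrow> qhom n n base \<Longrightarrow> qhom n n (xpow_fold n mo ixs base)"
  by (induction ixs) (auto simp: xpow_fold_def intro!: qtyp_cmp qtyp_xpow)

lemma xpow_fold_Suc: "\<forall>i\<in>set ixs. i < n \<Longrightarrow> qhom n n A \<Longrightarrow> qhom 1 1 B \<Longrightarrow>
   xpow_fold (Suc n) mo ixs (A \<otimes> B) = xpow_fold n mo ixs A \<otimes> B"
proof (induction ixs)
  case Nil
  then show ?case by (simp add: xpow_fold_def)
next
  case (Cons i ixs)
  then have i: "i < n" and ixs: "\<forall>i\<in>set ixs. i < n" by auto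
  let ?x = "abs_mor (xpow n i (Poly_Mapping.lookup mo i))"
  have "xpow_fold (Suc n) mo (i # ixs) (A \<otimes> B) = (?x \<otimes> qId 1) \<cdot> (xpow_fold n mo ixs A \<otimes> B)"
    using Cons i ixs by (simp add: xpow_fold_def abs_mor_xpow_Suc)
  also have "\<dots> = (?x \<cdot> xpow_fold n mo ixs A) \<otimes> (qId 1 \<cdot> B)"
    by (rule q_interchange[symmetric, where n=n and m=n and p=n and n'=1 and m'=1 and p'=1])
       (simp_all add: qtyp_xpow[OF i] qtyp_xpow_fold[OF ixs] Cons.prems)
  also have "\<dots> = xpow_fold n mo (i # ixs) A \<otimes> B"
    using Cons by (simp add: xpow_fold_def q_cmp_id_l)
  finally show ?case .
qed

definition qmonact :: "nat \<Rightarrow> (nat \<Rightarrow>\<^sub>0 nat) \<Rightarrow> 'k::field mor" where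
  "qmonact n mo = abs_mor (monact n mo)"

lemma qmonact_eq_xpow_fold: "qmonact n mo = xpow_fold n mo [0..<n] (qId n)"
proof -
  have "abs_mor (foldr (\<lambda>i acc. Cmp (xpow n i (Poly_Mapping.lookup mo i)) acc) ixs base)
      = xpow_fold n mo ixs (abs_mor base)" for ixs and base :: "'a nbmor"
    by (induction ixs) (simp_all add: xpow_fold_def abs_mor_simps)
  then show ?thesis by (simp add: qmonact_def monact_def abs_mor_simps)
qed

lemma qmonact_typ [simp]: "qtyp (qmonact n mo) = Some (n, n)"
  by (simp add: qmonact_eq_xpow_fold qtyp_xpow_fold)

lemma qmonact_0: "qmonact 0 mo = qId 0"
  by (simp add: qmonact_eq_xpow_fold xpow_fold_def)

lemma qmonact_Suc: "qmonact (Suc n) mo = qmonact n mo \<otimes> qXpow (Poly_Mapping.lookup mo n)"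
proof -
  let ?p = "qXpow (Poly_Mapping.lookup mo n) :: 'k::field mor"
  have "qmonact (Suc n) mo
      = xpow_fold (Suc n) mo [0..<n] (abs_mor (xpow (Suc n) n (Poly_Mapping.lookup mo n)) \<cdot> qId (Suc n))"
    by (simp add: qmonact_eq_xpow_fold xpow_fold_def)
  also have "abs_mor (xpow (Suc n) n (Poly_Mapping.lookup mo n)) \<cdot> qId (Suc n) = qId n \<otimes> ?p"
    by (simp add: abs_mor_xpow_last q_cmp_id_r qtyp_tns)
  also have "xpow_fold (Suc n) mo [0..<n] (qId n \<otimes> ?p) = xpow_fold n mo [0..<n] (qId n) \<otimes> ?p"
    by (rule xpow_fold_Suc) auto
  finally show ?thesis by (simp add: qmonact_eq_xpow_fold)
qed

lemma qmonact_cong: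
  "(\<And>i. i < n \<Longrightarrow> Poly_Mapping.lookup mo i = Poly_Mapping.lookup mo' i) \<Longrightarrow> qmonact n mo = qmonact n mo'"
  unfolding qmonact_def monact_def by (rule arg_cong[where f=abs_mor], rule foldr_cong) auto

definition qpolyact :: "nat \<Rightarrow> 'k::field mpoly \<Rightarrow> 'k mor" where
  "qpolyact n g = qsum n n (\<lambda>mo. Poly_Mapping.lookup g mo \<odot> qmonact n mo) (Poly_Mapping.keys g)"

lemma abs_mor_polyact: "abs_mor (polyact n g) = qpolyact n g"
proof -
  have "abs_mor (foldr (\<lambda>mo. Add (Sm (Poly_Mapping.lookup g mo) (monact n mo))) mos (Zero n n))
      = foldr (\<lambda>mo acc. (Poly_Mapping.lookup g mo \<odot> qmonact n mo) \<oplus> acc) mos (qZero n n)" for mos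
    by (induction mos) (simp_all add: abs_mor_simps qmonact_def)
  then show ?thesis
    by (simp add: polyact_def qpolyact_def qsum_foldr)
qed

lemma qpolyact_typ [simp]: "qtyp (qpolyact n g) = Some (n, n)"
  by (simp add: qpolyact_def)

lemma qpolyact_zero [simp]: "qpolyact n 0 = qZero n n"
  by (simp add: qpolyact_def)

lemma qpolyact_superset: "finite S \<Longrightarrow> Poly_Mapping.keys g \<subseteq> S \<Longrightarrow>
   qpolyact n g = qsum n n (\<lambda>mo. Poly_Mapping.lookup g mo \<odot> qmonact n mo) S"
  unfolding qpolyact_def by (rule qsum_mono_neutral[symmetric]) (auto simp: in_keys_iff q_sm_zero)

lemma qpolyact_add: "qpolyact n (g + h) = qpolyact n g \<oplus> qpolyact n h"
proof -
  let ?S = "Poly_Mapping.keys g \<union> Poly_Mapping.keys h"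
  have "qpolyact n (g + h) = qsum n n (\<lambda>mo. Poly_Mapping.lookup (g + h) mo \<odot> qmonact n mo) ?S"
    by (rule qpolyact_superset) (auto simp: keys_add)
  also have "\<dots> = qsum n n (\<lambda>mo. (Poly_Mapping.lookup g mo \<odot> qmonact n mo) \<oplus> (Poly_Mapping.lookup h mo \<odot> qmonact n mo)) ?S"
    by (rule qsum_cong) (simp add: lookup_add q_sm_add_scalar)
  also have "\<dots> = qsum n n (\<lambda>mo. Poly_Mapping.lookup g mo \<odot> qmonact n mo) ?S \<oplus> qsum n n (\<lambda>mo. Poly_Mapping.lookup h mo \<odot> qmonact n mo) ?S"
    by (rule qsum_add) auto
  also have "\<dots> = qpolyact n g \<oplus> qpolyact n h"
    by (simp add: qpolyact_superset[symmetric])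
  finally show ?thesis .
qed

lemma qpolyact_sum: "finite A \<Longrightarrow> qpolyact n (sum g A) = qsum n n (\<lambda>a. qpolyact n (g a)) A"
  by (induction A rule: finite_induct) (simp_all add: qpolyact_add qsum_insert)

lemma qpolyact_single: "qpolyact n (Poly_Mapping.single mo c) = c \<odot> qmonact n mo"
  by (cases "c = 0") (simp_all add: qpolyact_def q_sm_zero)

lemma poly_mapping_sum_single: "g = (\<Sum>mo\<in>Poly_Mapping.keys g. Poly_Mapping.single mo (Poly_Mapping.lookup g mo))"
  by (rule poly_mapping_eqI) (simp add: lookup_sum lookup_single when_def in_keys_iff)

definition vars_below :: "nat \<Rightarrow> 'k::zero mpoly \<Rightarrow> bool" where
  "vars_below n p \<longleftrightarrow> (\<forall>mo\<in>Poly_Mapping.keys p. \<forall>i\<ge>n. Poly_Mapping.lookup mo i = 0)"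

lemma vars_below_sum: "(\<And>a. a \<in> A \<Longrightarrow> vars_below n (g a)) \<Longrightarrow> vars_below n (sum g A)"
  unfolding vars_below_def using keys_sum[of g A] by blast

lemma vars_below_mult_single: "vars_below n g \<Longrightarrow> vars_below (Suc n) (g * Poly_Mapping.single (Poly_Mapping.single n k) c)"
proof -
  assume g: "vars_below n g"
  show ?thesis unfolding vars_below_def
  proof (intro ballI allI impI)
    fix mo i assume mo: "mo \<in> Poly_Mapping.keys (g * Poly_Mapping.single (Poly_Mapping.single n k) c)" and i: "Suc n \<le> i"
    from keys_mult[of g] mo obtain a b where ab: "mo = a + b" "a \<in> Poly_Mapping.keys g"
        "b \<in> Poly_Mapping.keys (Poly_Mapping.single (Poly_Mapping.single n k) c)" by blast
    then have "b = Poly_Mapping.single n k" by (simp split: if_splits)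
    with ab g i show "Poly_Mapping.lookup mo i = 0"
      by (simp add: vars_below_def lookup_add lookup_single_not_eq)
  qed
qed

lemma qpolyact_mult_var_power: "vars_below n (g :: 'k::field mpoly) \<Longrightarrow>
   qpolyact (Suc n) (g * Poly_Mapping.single (Poly_Mapping.single n k) c) = c \<odot> (qpolyact n g \<otimes> qXpow k)"
proof -
  assume g: "vars_below n g"
  let ?m = "Poly_Mapping.single n k"
  have "g * Poly_Mapping.single ?m c = (\<Sum>mo\<in>Poly_Mapping.keys g. Poly_Mapping.single mo (Poly_Mapping.lookup g mo)) * Poly_Mapping.single ?m c"
    using poly_mapping_sum_single[of g] by (rule arg_cong[where f="\<lambda>x. x * Poly_Mapping.single ?m c"])
  also have "\<dots> = (\<Sum>mo\<in>Poly_Mapping.keys g. Poly_Mapping.single (mo + ?m) (Poly_Mapping.lookup g mo * c))"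
    by (simp add: sum_distrib_right mult_single)
  finally have e: "g * Poly_Mapping.single ?m c = \<dots>" .
  have M: "(qmonact (Suc n) (mo + ?m) :: 'k mor) = qmonact n mo \<otimes> qXpow k" if "mo \<in> Poly_Mapping.keys g" for mo
  proof -
    have "Poly_Mapping.lookup mo n = 0" using g that by (simp add: vars_below_def)
    moreover have "(qmonact n (mo + ?m) :: 'k mor) = qmonact n mo"
      by (rule qmonact_cong) (simp add: lookup_add lookup_single_not_eq)
    ultimately show ?thesis by (simp add: qmonact_Suc lookup_add)
  qed
  have "qpolyact (Suc n) (g * Poly_Mapping.single ?m c)
      = qsum (Suc n) (Suc n) (\<lambda>mo. (Poly_Mapping.lookup g mo * c) \<odot> qmonact (Suc n) (mo + ?m)) (Poly_Mapping.keys g)"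
    by (simp add: e qpolyact_sum qpolyact_single)
  also have "\<dots> = qsum (Suc n) (Suc n) (\<lambda>mo. c \<odot> ((Poly_Mapping.lookup g mo \<odot> qmonact n mo) \<otimes> qXpow k)) (Poly_Mapping.keys g)"
    by (rule qsum_cong) (simp add: M q_sm_sm q_tns_sm_l qtyp_tns mult.commute)
  also have "\<dots> = c \<odot> qsum (Suc n) (Suc n) (\<lambda>mo. (Poly_Mapping.lookup g mo \<odot> qmonact n mo) \<otimes> qXpow k) (Poly_Mapping.keys g)"
    by (rule qsum_sm[symmetric]) (simp add: qtyp_tns)
  also have "qsum (Suc n) (Suc n) (\<lambda>mo. (Poly_Mapping.lookup g mo \<odot> qmonact n mo) \<otimes> qXpow k) (Poly_Mapping.keys g) = qpolyact n g \<otimes> qXpow k"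
    unfolding qpolyact_def by (subst qsum_tns_r[where p=1 and q=1]) (simp_all add: One_nat_def)
  finally show ?thesis .
qed

section \<open>The generating series of \<open>q\<^sub>r\<^sub>,\<^sub>n\<close>\<close>

definition qcoeff :: "nat \<Rightarrow> 'k::field" where
  "qcoeff k = (if k = 0 then 1 else 2)"

definition qfactor :: "'a::comm_ring_1 \<Rightarrow> 'a fps" where
  "qfactor c = Abs_fps (\<lambda>k. if k = 0 then 1 else 2 * c ^ k)"

definition geom_fps :: "'a::comm_ring_1 \<Rightarrow> 'a fps" where
  "geom_fps c = Abs_fps (\<lambda>k. c ^ k)"

lemma qfactor_nth: "fps_nth (qfactor c) k = (if k = 0 then 1 else 2 * c ^ k)"
  by (simp add: qfactor_def)

lemma qfactor_mult: "qfactor c * (1 - fps_const c * fps_X) = 1 + fps_const c * fps_X"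
proof -
  have "qfactor c * (1 - fps_const c * fps_X) = qfactor c - fps_const c * (fps_X * qfactor c)"
    by (simp add: algebra_simps)
  also have "\<dots> = 1 + fps_const c * fps_X"
  proof (rule fps_ext)
    fix k
    show "fps_nth (qfactor c - fps_const c * (fps_X * qfactor c)) k = fps_nth (1 + fps_const c * fps_X) k"
      by (cases k) (auto simp: qfactor_nth algebra_simps)
  qed
  finally show ?thesis .
qed

lemma geom_fps_mult: "geom_fps c * (1 - fps_const c * fps_X) = 1"
proof -
  have "geom_fps c * (1 - fps_const c * fps_X) = geom_fps c - fps_const c * (fps_X * geom_fps c)"
    by (simp add: algebra_simps)
  also have "\<dots> = 1"
  proof (rule fps_ext)
    fix k
    show "fps_nth (geom_fps c - fps_const c * (fps_X * geom_fps c)) k = fps_nth 1 k"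
      by (cases k) (simp_all add: geom_fps_def)
  qed
  finally show ?thesis .
qed

lemma qgen_eq_prod: "qgen n = (\<Prod>i<n. qfactor (mvar i :: 'k::field mpoly))"
proof -
  let ?P = "\<Prod>i<n. 1 - fps_const (mvar i :: 'k mpoly) * fps_X"
  let ?N = "\<Prod>i<n. 1 + fps_const (mvar i :: 'k mpoly) * fps_X"
  let ?G = "\<Prod>i<n. qfactor (mvar i :: 'k mpoly)"
  let ?H = "\<Prod>i<n. geom_fps (mvar i :: 'k mpoly)"
  have GP: "?G * ?P = ?N"
    by (simp add: prod.distrib[symmetric] qfactor_mult)
  have PH: "?P * ?H = 1"
    by (subst mult.commute) (simp add: prod.distrib[symmetric] geom_fps_mult)
  have uniq: "Q = ?G" if "Q * ?P = ?N" for Q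
  proof -
    have "Q = Q * (?P * ?H)" by (simp only: PH mult_1_right)
    also have "\<dots> = (Q * ?P) * ?H" by (simp only: mult.assoc)
    also have "\<dots> = ?N * ?H" by (simp only: that)
    also have "\<dots> = (?G * ?P) * ?H" by (simp only: GP)
    also have "\<dots> = ?G * (?P * ?H)" by (simp only: mult.assoc)
    also have "\<dots> = ?G" by (simp only: PH mult_1_right)
    finally show ?thesis .
  qed
  have "(THE Q. Q * ?P = ?N) = ?G"
    by (rule the_equality) (rule GP, rule uniq)
  then show ?thesis unfolding qgen_def .
qed

lemma qgen_Suc: "qgen (Suc n) = qgen n * qfactor (mvar n :: 'k::field mpoly)"
  by (simp add: qgen_eq_prod)

lemma mvar_pow: "(mvar i :: 'k::field mpoly) ^ k = Poly_Mapping.single (Poly_Mapping.single i k) 1"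
  by (induction k) (simp_all add: mvar_def mult_single single_add[symmetric] One_nat_def)

lemma qfactor_mvar_nth:
  "fps_nth (qfactor (mvar i :: 'k::field mpoly)) k = Poly_Mapping.single (Poly_Mapping.single i k) (qcoeff k)"
proof -
  have "(2::'k mpoly) * Poly_Mapping.single (Poly_Mapping.single i k) 1
      = Poly_Mapping.single (Poly_Mapping.single i k) 2"
    using mult_single[of 0 "2::'k" "Poly_Mapping.single i k" 1] by simp
  then show ?thesis by (simp add: qfactor_nth qcoeff_def mvar_pow)
qed

lemma qpoly_0: "qpoly r 0 = (if r = 0 then 1 else (0 :: 'k::field mpoly))"
  by (simp add: qpoly_def qgen_eq_prod)

lemma qpoly_Suc: "qpoly r (Suc n) = (\<Sum>a\<in>{..r}. qpoly a n * Poly_Mapping.single (Poly_Mapping.single n (r - a)) (qcoeff (r - a) :: 'k::field))"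
  by (simp add: qpoly_def qgen_Suc fps_mult_nth qfactor_mvar_nth atLeast0AtMost)

lemma vars_below_qpoly: "vars_below n (qpoly r n :: 'k::field mpoly)"
proof (induction n arbitrary: r)
  case 0
  then show ?case by (simp add: qpoly_0 vars_below_def)
next
  case (Suc n)
  show ?case unfolding qpoly_Suc
    by (intro vars_below_sum vars_below_mult_single Suc.IH)
qed

section \<open>The morphisms \<open>q\<^sub>r\<^sub>,\<^sub>n 1\<^sub>n\<close>\<close>

fun qQ :: "nat \<Rightarrow> nat \<Rightarrow> 'k::field mor" where
  "qQ r 0 = (if r = 0 then qId 0 else qZero 0 0)"
| "qQ r (Suc n) = qsum (Suc n) (Suc n) (\<lambda>a. qcoeff (r - a) \<odot> (qQ a n \<otimes> qXpow (r - a))) {..r}"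

lemma qQ_typ [simp]: "qtyp (qQ r n) = Some (n, n)"
  by (cases n) auto

lemma abs_mor_polyact_qpoly: "abs_mor (polyact n (qpoly r n) :: 'k::field nbmor) = qQ r n"
proof (induction n arbitrary: r)
  case 0
  then show ?case
    by (simp add: abs_mor_polyact qpoly_0 qpolyact_single[of 0 0 1, simplified] qmonact_0 q_sm_one)
next
  case (Suc n)
  have "abs_mor (polyact (Suc n) (qpoly r (Suc n)) :: 'k nbmor)
      = qsum (Suc n) (Suc n) (\<lambda>a. qpolyact (Suc n) (qpoly a n * Poly_Mapping.single (Poly_Mapping.single n (r - a)) (qcoeff (r - a)))) {..r}"
    by (simp add: abs_mor_polyact qpoly_Suc qpolyact_sum)
  also have "\<dots> = qQ r (Suc n)"
    by (simp add: qpolyact_mult_var_power vars_below_qpoly Suc.IH[symmetric] abs_mor_polyact)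
  finally show ?case .
qed

lemma qQ_tns_split: "(qQ r (n + k) :: 'k::field mor) = qsum (n + k) (n + k) (\<lambda>a. qQ a n \<otimes> qQ (r - a) k) {..r}"
proof (induction k arbitrary: r)
  case 0
  have "qsum n n (\<lambda>a. qQ a n \<otimes> qQ (r - a) 0) {..r} = (qsum n n (\<lambda>a. if a = r then qQ a n else qZero n n) {..r} :: 'k mor)"
    by (rule qsum_cong) (auto simp: q_tns_unit_r q_tns_qZero_r)
  also have "\<dots> = qQ r n" by (rule qsum_delta) auto
  finally show ?case by simp
next
  case (Suc k)
  let ?N = "Suc (n + k)"
  define G where "G = (\<lambda>a c. qQ a n \<otimes> (qcoeff (r - c) \<odot> (qQ (c - a) k \<otimes> qXpow (r - c))) :: 'k mor)"
  have G_typ: "qhom ?N ?N (G a c)" for a c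
    by (simp add: G_def qtyp_tns)
  have expand: "qcoeff (r - c) \<odot> (qQ c (n + k) \<otimes> qXpow (r - c)) = qsum ?N ?N (\<lambda>a. G a c) {..c}" for c
  proof -
    have "qcoeff (r - c) \<odot> (qQ c (n + k) \<otimes> qXpow (r - c) :: 'k mor)
        = qcoeff (r - c) \<odot> (qsum (n + k) (n + k) (\<lambda>a. qQ a n \<otimes> qQ (c - a) k) {..c} \<otimes> qXpow (r - c))"
      by (simp only: Suc.IH[of c])
    also have "\<dots> = qsum ?N ?N (\<lambda>a. qcoeff (r - c) \<odot> ((qQ a n \<otimes> qQ (c - a) k) \<otimes> qXpow (r - c))) {..c}"
      by (simp add: qsum_tns_r[where p=1 and q=1] qsum_sm qtyp_tns One_nat_def)
    also have "\<dots> = qsum ?N ?N (\<lambda>a. G a c) {..c}"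
      by (rule qsum_cong) (simp add: G_def q_tns_assoc q_tns_sm_r qtyp_tns)
    finally show ?thesis .
  qed
  have collapse: "qsum ?N ?N (\<lambda>b. G a (a + b)) {..r - a} = qQ a n \<otimes> qQ (r - a) (Suc k)" for a
  proof -
    have "qsum ?N ?N (\<lambda>b. G a (a + b)) {..r - a}
        = qsum ?N ?N (\<lambda>b. qQ a n \<otimes> (qcoeff (r - a - b) \<odot> (qQ b k \<otimes> qXpow (r - a - b)))) {..r - a}"
      by (rule qsum_cong) (simp add: G_def diff_diff_add)
    also have "\<dots> = qQ a n \<otimes> qQ (r - a) (Suc k)"
      by (simp add: qsum_tns_l[where p=n and q=n] qtyp_tns One_nat_def)
    finally show ?thesis .
  qed
  have "(qQ r (n + Suc k) :: 'k mor) = qsum ?N ?N (\<lambda>c. qsum ?N ?N (\<lambda>a. G a c) {..c}) {..r}"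
    by (simp add: expand)
  also have "\<dots> = qsum ?N ?N (\<lambda>a. qsum ?N ?N (\<lambda>b. G a (a + b)) {..r - a}) {..r}"
    by (rule qsum_triangle) (rule G_typ)
  finally show ?case by (simp add: collapse)
qed

lemma qQ_1: "qQ r 1 = qcoeff r \<odot> (qXpow r :: 'k::field mor)"
proof -
  have "(qQ r 1 :: 'k mor) = qsum 1 1 (\<lambda>b. if b = 0 then qcoeff r \<odot> qXpow r else qZero 1 1) {..r}"
    by (simp add: One_nat_def, rule qsum_cong) (auto simp: q_tns_unit_l q_tns_qZero_l q_sm_qZero)
  also have "\<dots> = qcoeff r \<odot> qXpow r" by (subst qsum_delta) auto
  finally show ?thesis .
qed

section \<open>Two strands\<close>

lemma zigzag1_tns_qId: "(qCap \<otimes> qId 2) \<cdot> (qId 1 \<otimes> qCup \<otimes> qId 1) = (qId 2 :: 'k::field mor)"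
proof -
  have "(qCap \<otimes> qId 2) \<cdot> (qId 1 \<otimes> qCup \<otimes> qId 1) = ((qCap \<otimes> qId 1) \<otimes> qId 1) \<cdot> ((qId 1 \<otimes> qCup) \<otimes> (qId 1 :: 'k mor))"
    by (simp add: q_tns_id q_tns_assoc)
  also have "\<dots> = ((qCap \<otimes> qId 1) \<cdot> (qId 1 \<otimes> qCup)) \<otimes> (qId 1 \<cdot> qId 1)"
    by (rule q_interchange[symmetric]) (simp_all add: qtyp_eqs)
  finally show ?thesis by (simp add: q_cmp_id_l q_zigzag1 q_tns_id)
qed

lemma zigzag2_tns_qId: "((qId 1 \<otimes> qCap) \<otimes> qId 1) \<cdot> (qCup \<otimes> qId 2) = (qId 2 :: 'k::field mor)"
proof -
  have "((qId 1 \<otimes> qCap) \<otimes> qId 1) \<cdot> (qCup \<otimes> qId 2) = ((qId 1 \<otimes> qCap) \<otimes> qId 1) \<cdot> ((qCup \<otimes> qId 1) \<otimes> (qId 1 :: 'k mor))"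
    by (simp add: q_tns_qId_tns_qId)
  also have "\<dots> = ((qId 1 \<otimes> qCap) \<cdot> (qCup \<otimes> qId 1)) \<otimes> (qId 1 \<cdot> qId 1)"
    by (rule q_interchange[symmetric]) (simp_all add: qtyp_eqs)
  finally show ?thesis by (simp add: q_zigzag2 q_cmp_id_l q_tns_id)
qed

lemma qId_tns_zigzag1: "(qId 1 \<otimes> qCap \<otimes> qId 1) \<cdot> (qId 2 \<otimes> qCup) = (qId 2 :: 'k::field mor)"
proof -
  have "(qId 1 \<otimes> qCap \<otimes> qId 1) \<cdot> (qId 2 \<otimes> qCup) = (qId 1 \<otimes> qCap \<otimes> qId 1) \<cdot> (qId 1 \<otimes> (qId 1 \<otimes> (qCup :: 'k mor)))"
    by (simp add: q_qId_tns_qId_tns)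
  also have "\<dots> = qId 1 \<otimes> ((qCap \<otimes> qId 1) \<cdot> (qId 1 \<otimes> qCup))"
    by (rule q_whisker_left[symmetric]) (simp_all add: qtyp_eqs)
  finally show ?thesis by (simp add: q_zigzag1 q_tns_id)
qed

lemma cap_dot_cup: "(qCap \<otimes> qId 1) \<cdot> (qId 1 \<otimes> qX \<otimes> qId 1) \<cdot> (qId 1 \<otimes> qCup) = (-1) \<odot> (qX :: 'k::field mor)"
proof -
  have "(qCap \<otimes> qId 1) \<cdot> (qId 1 \<otimes> qX \<otimes> qId 1) = (qCap \<cdot> (qId 1 \<otimes> qX)) \<otimes> (qId 1 \<cdot> qId 1)"
    by (simp add: q_tns_assoc q_interchange qtyp_eqs)
  also have "\<dots> = (-1) \<odot> ((qCap \<otimes> qId 1) \<cdot> (qX \<otimes> qId 2) :: 'k mor)"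
    by (simp add: q_cap_dot q_tns_sm_l q_interchange q_tns_qId_tns_qId qtyp_eqs)
  finally have cap: "(qCap \<otimes> qId 1) \<cdot> (qId 1 \<otimes> qX \<otimes> qId 1) = (-1) \<odot> ((qCap \<otimes> qId 1) \<cdot> (qX \<otimes> qId 2) :: 'k mor)" .
  have cup: "(qX \<otimes> qId 2) \<cdot> (qId 1 \<otimes> qCup) = (qId 1 \<otimes> qCup) \<cdot> (qX :: 'k mor)"
    using q_slide[of qX 1 1 qCup 0 2, symmetric] by (simp add: q_tns_unit_r)
  have "(qCap \<otimes> qId 1) \<cdot> (qId 1 \<otimes> qX \<otimes> qId 1) \<cdot> (qId 1 \<otimes> qCup)
      = (-1) \<odot> ((qCap \<otimes> qId 1) \<cdot> ((qX \<otimes> qId 2) \<cdot> (qId 1 \<otimes> qCup :: 'k mor)))"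
    by (simp add: q_cmp_assoc[symmetric] cap q_cmp_sm_l qtyp_eqs del: q_cmp_assoc)
  also have "\<dots> = (-1) \<odot> (((qCap \<otimes> qId 1) \<cdot> (qId 1 \<otimes> qCup)) \<cdot> qX)"
    by (simp add: cup q_cmp_assoc qtyp_eqs)
  finally show ?thesis by (simp add: q_zigzag1 q_cmp_id_l)
qed

lemma mate_cup_slide:
  fixes f :: "'k::field mor"
  assumes f: "qhom 1 1 f"
  shows "(qId 1 \<otimes> ((qCap \<otimes> qId 1) \<cdot> (qId 1 \<otimes> f \<otimes> qId 1) \<cdot> (qId 1 \<otimes> qCup))) \<cdot> qCup = (f \<otimes> qId 1) \<cdot> qCup"
proof -
  let ?V = "(f \<otimes> qId 1) \<cdot> qCup"
  have V: "qhom 0 2 ?V" using f by (simp add: qtyp_eqs)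
  have "qId 1 \<otimes> ((qCap \<otimes> qId 1) \<cdot> (qId 1 \<otimes> f \<otimes> qId 1) \<cdot> (qId 1 \<otimes> qCup))
      = (qId 1 \<otimes> (qCap \<otimes> qId 1)) \<cdot> (qId 1 \<otimes> (qId 1 \<otimes> f \<otimes> qId 1)) \<cdot> (qId 1 \<otimes> (qId 1 \<otimes> qCup))"
    using f by (simp add: q_whisker_left qtyp_eqs)
  also have "\<dots> = ((qId 1 \<otimes> qCap) \<otimes> qId 1) \<cdot> (qId 2 \<otimes> (f \<otimes> qId 1)) \<cdot> (qId 2 \<otimes> qCup)"
    using f by (simp add: q_tns_assoc q_qId_tns_qId_tns qtyp_eqs)
  finally have whiskered: "qId 1 \<otimes> ((qCap \<otimes> qId 1) \<cdot> (qId 1 \<otimes> f \<otimes> qId 1) \<cdot> (qId 1 \<otimes> qCup))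
      = ((qId 1 \<otimes> qCap) \<otimes> qId 1) \<cdot> (qId 2 \<otimes> (f \<otimes> qId 1)) \<cdot> (qId 2 \<otimes> qCup)" .
  have cups: "(qId 2 \<otimes> qCup) \<cdot> qCup = qCup \<otimes> (qCup :: 'k mor)"
    by (simp add: q_tns_via_left[of qCup 0 2 qCup 0 2] q_tns_unit_r)
  have "(qId 2 \<otimes> (f \<otimes> qId 1)) \<cdot> (qId 2 \<otimes> qCup) \<cdot> qCup = (qId 2 \<otimes> (f \<otimes> qId 1)) \<cdot> (qCup \<otimes> qCup)"
    by (simp only: cups)
  also have "\<dots> = qCup \<otimes> ?V"
    using f by (simp add: q_interchange[symmetric] q_cmp_id_l qtyp_eqs)
  also have "\<dots> = (qCup \<otimes> qId 2) \<cdot> ?V"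
    using q_tns_via_right[OF _ V, of qCup 0 2] by (simp add: q_tns_unit_l V)
  finally have slid: "(qId 2 \<otimes> (f \<otimes> qId 1)) \<cdot> (qId 2 \<otimes> qCup) \<cdot> qCup = (qCup \<otimes> qId 2) \<cdot> ?V" .
  show ?thesis
    using f V by (simp add: whiskered slid q_cmp_assoc qtyp_eqs)
      (simp add: q_cmp_assoc[symmetric] zigzag2_tns_qId q_cmp_id_l qtyp_eqs del: q_cmp_assoc)
qed

lemma dot_cup_slide: "(qX \<otimes> qId 1) \<cdot> qCup = (-1) \<odot> ((qId 1 \<otimes> qX) \<cdot> (qCup :: 'k::field mor))"
proof -
  have "(qX \<otimes> qId 1) \<cdot> qCup
      = (qId 1 \<otimes> ((qCap \<otimes> qId 1) \<cdot> (qId 1 \<otimes> qX \<otimes> qId 1) \<cdot> (qId 1 \<otimes> (qCup :: 'k mor)))) \<cdot> qCup"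
    by (simp add: mate_cup_slide)
  also have "\<dots> = (-1) \<odot> ((qId 1 \<otimes> qX) \<cdot> qCup)"
    by (simp add: cap_dot_cup q_tns_sm_r q_cmp_sm_l qtyp_eqs)
  finally show ?thesis .
qed

lemma cap_dot_tns_qId: "(qCap \<otimes> qId 2) \<cdot> ((qId 1 \<otimes> qX) \<otimes> qId 2) = (-1) \<odot> ((qCap \<otimes> qId 2) \<cdot> (qX \<otimes> qId 3 :: 'k::field mor))"
proof -
  have "(qCap \<otimes> qId 2) \<cdot> ((qId 1 \<otimes> qX) \<otimes> qId 2) = (qCap \<cdot> (qId 1 \<otimes> qX)) \<otimes> (qId 2 \<cdot> (qId 2 :: 'k mor))"
    by (rule q_interchange[symmetric]) (simp_all add: qtyp_eqs)
  also have "\<dots> = (-1) \<odot> ((qCap \<cdot> (qX \<otimes> qId 1)) \<otimes> (qId 2 \<cdot> qId 2))"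
    by (simp add: q_cap_dot q_tns_sm_l qtyp_eqs del: q_cmp_id_l)
  also have "(qCap \<cdot> (qX \<otimes> qId 1)) \<otimes> (qId 2 \<cdot> qId 2) = (qCap \<otimes> qId 2) \<cdot> (qX \<otimes> qId 3 :: 'k mor)"
    by (simp add: q_interchange q_tns_qId_tns_qId qtyp_eqs)
  finally show ?thesis .
qed

lemma cap_tns_qId_cmp:
  assumes a: "qhom 2 2 a"
  shows "(qCap \<otimes> qId 2) \<cdot> (qId 1 \<otimes> a \<otimes> qId 1) = ((qCap \<otimes> qId 1) \<cdot> (qId 1 \<otimes> a)) \<otimes> qId 1"
proof -
  have "(qCap \<otimes> qId 2) \<cdot> (qId 1 \<otimes> a \<otimes> qId 1) = ((qCap \<otimes> qId 1) \<otimes> qId 1) \<cdot> ((qId 1 \<otimes> a) \<otimes> qId 1)"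
    using a by (simp add: q_tns_id q_tns_assoc)
  also have "\<dots> = ((qCap \<otimes> qId 1) \<cdot> (qId 1 \<otimes> a)) \<otimes> (qId 1 \<cdot> qId 1)"
    using a by (intro q_interchange[symmetric]) (simp_all add: qtyp_eqs)
  finally show ?thesis by (simp add: q_cmp_id_l)
qed

lemma qId_tns_cmp_cup:
  assumes a: "qhom 2 2 a"
  shows "(qId 1 \<otimes> a \<otimes> qId 1) \<cdot> (qId 2 \<otimes> qCup) = qId 1 \<otimes> ((a \<otimes> qId 1) \<cdot> (qId 1 \<otimes> qCup))"
proof -
  have "qId 1 \<otimes> ((a \<otimes> qId 1) \<cdot> (qId 1 \<otimes> qCup)) = (qId 1 \<otimes> a \<otimes> qId 1) \<cdot> (qId 1 \<otimes> (qId 1 \<otimes> qCup))"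
    using a by (intro q_whisker_left) (simp_all add: qtyp_eqs)
  then show ?thesis by (simp add: q_qId_tns_qId_tns)
qed

lemma rotate_tau_rep: "(qCap \<otimes> qId 2) \<cdot> (qId 1 \<otimes> qTau \<otimes> qId 1) \<cdot> (qId 2 \<otimes> qCup) = (qTau :: 'k::field mor)"
proof -
  have pitchfork: "(qCap \<otimes> qId 2) \<cdot> (qId 1 \<otimes> qTau \<otimes> qId 1) = (qId 1 \<otimes> qCap \<otimes> qId 1) \<cdot> (qTau \<otimes> (qId 2 :: 'k mor))"
  proof -
    have "(qCap \<otimes> qId 2) \<cdot> (qId 1 \<otimes> qTau \<otimes> qId 1) = ((qId 1 \<otimes> qCap) \<cdot> (qTau \<otimes> qId 1)) \<otimes> (qId 1 :: 'k mor)"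
      by (simp add: cap_tns_qId_cmp q_pitchfork)
    also have "\<dots> = ((qId 1 \<otimes> qCap) \<otimes> qId 1) \<cdot> ((qTau \<otimes> qId 1) \<otimes> qId 1)"
      by (subst q_whisker_right) (simp_all add: qtyp_eqs)
    finally show ?thesis by (simp add: q_tns_assoc q_tns_id)
  qed
  have slide: "(qTau \<otimes> qId 2) \<cdot> (qId 2 \<otimes> qCup) = (qId 2 \<otimes> qCup) \<cdot> (qTau :: 'k mor)"
    using q_slide[of qTau 2 2 qCup 0 2, symmetric] by (simp add: q_tns_unit_r)
  have "(qCap \<otimes> qId 2) \<cdot> (qId 1 \<otimes> qTau \<otimes> qId 1) \<cdot> (qId 2 \<otimes> qCup)
      = (qId 1 \<otimes> qCap \<otimes> qId 1) \<cdot> (qTau \<otimes> qId 2) \<cdot> (qId 2 \<otimes> (qCup :: 'k mor))"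
    by (rule q_cmp_assoc_eq2[OF pitchfork]) (simp_all add: qtyp_eqs)
  also have "\<dots> = qId 2 \<cdot> qTau"
    by (simp add: slide q_cmp_assoc_eq[OF qId_tns_zigzag1] qtyp_eqs)
  finally show ?thesis by (simp add: q_cmp_id_l)
qed

lemma qId_tns_dot_cup:
  "(qId 2 \<otimes> (qX \<otimes> qId 1)) \<cdot> (qId 2 \<otimes> qCup) = (-1) \<odot> ((qId 3 \<otimes> qX) \<cdot> (qId 2 \<otimes> (qCup :: 'k::field mor)))"
proof -
  have "(qId 2 \<otimes> (qX \<otimes> qId 1)) \<cdot> (qId 2 \<otimes> qCup) = qId 2 \<otimes> ((qX \<otimes> qId 1) \<cdot> (qCup :: 'k mor))"
    by (rule q_whisker_left[symmetric]) (simp_all add: qtyp_eqs)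
  also have "\<dots> = (-1) \<odot> (qId 2 \<otimes> ((qId 1 \<otimes> qX) \<cdot> qCup))"
    by (simp add: dot_cup_slide q_tns_sm_r qtyp_eqs)
  also have "qId 2 \<otimes> ((qId 1 \<otimes> qX) \<cdot> qCup) = (qId 3 \<otimes> qX) \<cdot> (qId 2 \<otimes> (qCup :: 'k mor))"
    by (simp add: q_whisker_left q_qId_tns_qId_tns qtyp_eqs)
  finally show ?thesis .
qed

text \<open>Making the endomorphisms of \<open>B \<star> B\<close> a type turns the two-strand computations into
  ordinary ring algebra.\<close>

typedef (overloaded) 'k end2 = "{a :: 'k::field mor. qtyp a = Some (2, 2)}"
  morphisms rep2 abs2
  by (rule exI[of _ "qId 2"]) simp

setup_lifting type_definition_end2

instantiation end2 :: (field) "{ring, monoid_mult}"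
begin

lift_definition zero_end2 :: "'k::field end2" is "qZero 2 2" by simp
lift_definition one_end2 :: "'k::field end2" is "qId 2" by simp
lift_definition plus_end2 :: "'k::field end2 \<Rightarrow> 'k end2 \<Rightarrow> 'k end2" is "\<lambda>a b. a \<oplus> b" by (rule qtyp_add)
lift_definition times_end2 :: "'k::field end2 \<Rightarrow> 'k end2 \<Rightarrow> 'k end2" is "\<lambda>a b. a \<cdot> b" by (rule qtyp_cmp)
lift_definition uminus_end2 :: "'k::field end2 \<Rightarrow> 'k end2" is "\<lambda>a. (-1) \<odot> a" by simp
lift_definition minus_end2 :: "'k::field end2 \<Rightarrow> 'k end2 \<Rightarrow> 'k end2" is "\<lambda>a b. a \<oplus> ((-1) \<odot> b)" by (simp add: qtyp_add)

instance
proof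
  fix a b c :: "'k::field end2"
  show "a + b + c = a + (b + c)" by transfer (rule q_add_assoc)
  show "a + b = b + a" by transfer (rule q_add_comm)
  show "0 + a = a" by transfer (rule q_zero_add)
  show "- a + a = 0" by transfer (simp add: q_add_comm[of _ 2 2] q_add_neg)
  show "a - b = a + - b" by transfer simp
  show "a * b * c = a * (b * c)" by transfer (rule q_cmp_assoc)
  show "(a + b) * c = a * c + b * c" by transfer (rule q_cmp_add_l)
  show "a * (b + c) = a * b + a * c" by transfer (rule q_cmp_add_r)
  show "1 * a = a" by transfer (rule q_cmp_id_l)
  show "a * 1 = a" by transfer (rule q_cmp_id_r)
qed

end

lift_definition scale :: "'k::field \<Rightarrow> 'k end2 \<Rightarrow> 'k end2" is "\<lambda>c a. c \<odot> a" by simp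

lemma scale_mult_left: "scale c y * z = scale c (y * z)"
  by transfer (rule q_cmp_sm_l)

lemma scale_mult_right: "y * scale c z = scale c (y * z)"
  by transfer (rule q_cmp_sm_r)

lemma scale_add: "scale c (y + z) = scale c y + scale c z"
  by transfer (rule q_sm_add)

lemma scale_add_scalar: "scale (c + d) y = scale c y + scale d y"
  by transfer (rule q_sm_add_scalar)

lemma scale_scale: "scale c (scale d y) = scale (c * d) y"
  by transfer (rule q_sm_sm)

lemma scale_one [simp]: "scale 1 y = y"
  by transfer (rule q_sm_one)

lemma scale_zero [simp]: "scale 0 y = 0"
  by transfer (rule q_sm_zero)

lemma scale_minus_one: "scale (-1) y = - y"
  by transfer simp

lemma scale_neg: "scale (- c) y = - scale c y"
proof -
  have "scale (- c) y = scale (-1) (scale c y)" by (simp add: scale_scale)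
  then show ?thesis by (simp add: scale_minus_one)
qed

lemma scale_diff_scalar: "scale (c - d) y = scale c y - scale d y"
  using scale_add_scalar[of c "- d" y] by (simp add: scale_neg)

lemma rep2_typ [simp]: "qtyp (rep2 a) = Some (2, 2)"
  using rep2 by simp

lemma rep2_add: "rep2 (a + b) = rep2 a \<oplus> rep2 b"
  by (simp add: plus_end2.rep_eq)

lemma rep2_mult: "rep2 (a * b) = rep2 a \<cdot> rep2 b"
  by (simp add: times_end2.rep_eq)

lemma rep2_zero: "rep2 0 = qZero 2 2"
  by (simp add: zero_end2.rep_eq)

lemma rep2_one: "rep2 1 = qId 2"
  by (simp add: one_end2.rep_eq)

lemma rep2_scale: "rep2 (scale c a) = c \<odot> rep2 a"
  by (simp add: scale.rep_eq)

lemma rep2_sum: "rep2 (sum f S) = qsum 2 2 (\<lambda>x. rep2 (f x)) S"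
  by (induction S rule: infinite_finite_induct) (simp_all add: qsum_infinite rep2_zero rep2_add qsum_insert)

lemma rep2_eqI: "rep2 a = rep2 b \<Longrightarrow> a = b"
  using rep2_inject by blast

lemma rep2_neg: "rep2 (- a) = (-1) \<odot> rep2 a"
  by (simp add: uminus_end2.rep_eq)

lemma rep2_diff: "rep2 (a - b) = rep2 a \<oplus> ((-1) \<odot> rep2 b)"
  by (simp add: minus_end2.rep_eq)

lift_definition x1 :: "'k::field end2" is "qX \<otimes> qId 1" by (simp add: qtyp_tns)

lift_definition x2 :: "'k::field end2" is "qId 1 \<otimes> qX" by (simp add: qtyp_tns)

lift_definition tau :: "'k::field end2" is "qTau" by simp

lift_definition cupcap :: "'k::field end2" is "qCup \<cdot> qCap" by (simp add: qtyp_cmp)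

lemma rep2_x1: "rep2 x1 = qX \<otimes> qId 1" by (simp add: x1.rep_eq)

lemma rep2_x2: "rep2 x2 = qId 1 \<otimes> qX" by (simp add: x2.rep_eq)

lemma rep2_tau: "rep2 tau = qTau" by (simp add: tau.rep_eq)

lemma rep2_cupcap: "rep2 cupcap = qCup \<cdot> qCap" by (simp add: cupcap.rep_eq)

definition rotate :: "'k::field end2 \<Rightarrow> 'k end2" where
  "rotate a = abs2 ((qCap \<otimes> qId 2) \<cdot> (qId 1 \<otimes> rep2 a \<otimes> qId 1) \<cdot> (qId 2 \<otimes> qCup))"

lemma rep2_rotate: "rep2 (rotate a) = (qCap \<otimes> qId 2) \<cdot> (qId 1 \<otimes> rep2 a \<otimes> qId 1) \<cdot> (qId 2 \<otimes> qCup)"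
  unfolding rotate_def by (rule abs2_inverse) (simp add: qtyp_eqs)

lemma rotate_add: "rotate (a + b) = rotate a + rotate b"
proof (rule rep2_eqI)
  have "qId 1 \<otimes> (rep2 a \<oplus> rep2 b) \<otimes> qId 1 = (qId 1 \<otimes> rep2 a \<otimes> qId 1) \<oplus> (qId 1 \<otimes> rep2 b \<otimes> qId 1)"
    by (simp add: q_tns_add_l[where n=2 and m=2 and p=1 and q=1] q_tns_add_r[where n=3 and m=3 and p=1 and q=1] qtyp_eqs)
  then show "rep2 (rotate (a + b)) = rep2 (rotate a + rotate b)"
    unfolding rep2_rotate rep2_add
    by (simp only:, subst q_cmp_add_l[where n=4 and m=4 and p=2], simp_all add: qtyp_eqs,
        subst q_cmp_add_r[where n=2 and m=4 and p=2], simp_all add: qtyp_eqs)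
qed

lemma rotate_scale: "rotate (scale c a) = scale c (rotate a)"
proof (rule rep2_eqI)
  have "qId 1 \<otimes> (c \<odot> rep2 a) \<otimes> qId 1 = c \<odot> (qId 1 \<otimes> rep2 a \<otimes> qId 1)"
    by (simp add: q_tns_sm_l[where n=2 and m=2 and p=1 and q=1] q_tns_sm_r[where n=3 and m=3 and p=1 and q=1] qtyp_eqs)
  then show "rep2 (rotate (scale c a)) = rep2 (scale c (rotate a))"
    unfolding rep2_rotate rep2_scale
    by (simp only:, subst q_cmp_sm_l[where n=4 and m=4 and p=2], simp_all add: qtyp_eqs,
        subst q_cmp_sm_r[where n=2 and m=4 and p=2], simp_all add: qtyp_eqs)
qed

lemma rotate_neg: "rotate (- a) = - rotate a"
  using rotate_scale[of "-1" a] by (simp add: scale_minus_one)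

lemma rotate_diff: "rotate (a - b) = rotate a - rotate b"
  using rotate_add[of a "- b"] by (simp add: rotate_neg)

lemma rotate_x1_mult: "rotate (x1 * a) = - (rotate a * x1)"
proof (rule rep2_eqI)
  let ?W = "(rep2 a \<otimes> qId 1) \<cdot> (qId 1 \<otimes> qCup)"
  have W: "qhom 1 3 ?W" by (simp add: qtyp_eqs)
  have whisk: "qId 1 \<otimes> ((qX \<otimes> qId 1) \<cdot> rep2 a) \<otimes> qId 1
      = ((qId 1 \<otimes> qX) \<otimes> qId 2) \<cdot> (qId 1 \<otimes> rep2 a \<otimes> qId 1)"
  proof -
    have "qId 1 \<otimes> ((qX \<otimes> qId 1) \<cdot> rep2 a) \<otimes> qId 1
        = qId 1 \<otimes> (((qX \<otimes> qId 1) \<otimes> qId 1) \<cdot> (rep2 a \<otimes> qId 1))"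
      by (subst q_whisker_right) (simp_all add: qtyp_eqs)
    also have "\<dots> = (qId 1 \<otimes> ((qX \<otimes> qId 1) \<otimes> qId 1)) \<cdot> (qId 1 \<otimes> rep2 a \<otimes> qId 1)"
      by (subst q_whisker_left) (simp_all add: qtyp_eqs)
    finally show ?thesis by (simp add: q_tns_assoc q_tns_id)
  qed
  have slide: "(qX \<otimes> qId 3) \<cdot> (qId 1 \<otimes> ?W) = (qId 1 \<otimes> ?W) \<cdot> (qX \<otimes> qId 1)"
    using q_slide[OF _ W, of qX 1 1] by simp
  have "rep2 (rotate (x1 * a)) = (qCap \<otimes> qId 2) \<cdot> ((qId 1 \<otimes> qX) \<otimes> qId 2) \<cdot> (qId 1 \<otimes> ?W)"
    by (simp add: rep2_rotate rep2_mult rep2_x1 whisk qId_tns_cmp_cup q_cmp_assoc qtyp_eqs)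
  also have "\<dots> = ((-1) \<odot> ((qCap \<otimes> qId 2) \<cdot> (qX \<otimes> qId 3))) \<cdot> (qId 1 \<otimes> ?W)"
    by (rule q_cmp_assoc_eq[OF cap_dot_tns_qId]) (simp_all add: qtyp_eqs)
  also have "\<dots> = (-1) \<odot> ((qCap \<otimes> qId 2) \<cdot> (qId 1 \<otimes> ?W) \<cdot> (qX \<otimes> qId 1))"
    by (simp add: q_cmp_sm_l q_cmp_assoc slide qtyp_eqs)
  also have "\<dots> = rep2 (- (rotate a * x1))"
    by (simp add: rep2_neg rep2_mult rep2_rotate rep2_x1 qId_tns_cmp_cup q_cmp_assoc qtyp_eqs)
  finally show "rep2 (rotate (x1 * a)) = rep2 (- (rotate a * x1))" .
qed

lemma rotate_mult_x2: "rotate (a * x2) = - (x2 * rotate a)"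
proof (rule rep2_eqI)
  let ?V = "(qCap \<otimes> qId 1) \<cdot> (qId 1 \<otimes> rep2 a)"
  have V: "qhom 3 1 ?V" by (simp add: qtyp_eqs)
  have whisk: "qId 1 \<otimes> (rep2 a \<cdot> (qId 1 \<otimes> qX)) \<otimes> qId 1
      = (qId 1 \<otimes> rep2 a \<otimes> qId 1) \<cdot> (qId 2 \<otimes> (qX \<otimes> qId 1))"
  proof -
    have "qId 1 \<otimes> (rep2 a \<cdot> (qId 1 \<otimes> qX)) \<otimes> qId 1
        = qId 1 \<otimes> ((rep2 a \<otimes> qId 1) \<cdot> ((qId 1 \<otimes> qX) \<otimes> qId 1))"
      by (subst q_whisker_right) (simp_all add: qtyp_eqs)
    also have "\<dots> = (qId 1 \<otimes> rep2 a \<otimes> qId 1) \<cdot> (qId 1 \<otimes> ((qId 1 \<otimes> qX) \<otimes> qId 1))"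
      by (subst q_whisker_left) (simp_all add: qtyp_eqs)
    finally show ?thesis by (simp add: q_tns_assoc q_qId_tns_qId_tns qtyp_eqs)
  qed
  have slide: "(?V \<otimes> qId 1) \<cdot> (qId 3 \<otimes> qX) = (qId 1 \<otimes> qX) \<cdot> (?V \<otimes> qId 1)"
    using q_slide[OF V, of qX 1 1] by simp
  have rot: "rep2 (rotate a) = (?V \<otimes> qId 1) \<cdot> (qId 2 \<otimes> qCup)"
    unfolding rep2_rotate by (rule q_cmp_assoc_eq[OF cap_tns_qId_cmp]) (simp_all add: qtyp_eqs)
  have "rep2 (rotate (a * x2))
      = (qCap \<otimes> qId 2) \<cdot> (qId 1 \<otimes> rep2 a \<otimes> qId 1) \<cdot> (qId 2 \<otimes> (qX \<otimes> qId 1)) \<cdot> (qId 2 \<otimes> qCup)"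
    by (simp add: rep2_rotate rep2_mult rep2_x2 whisk q_cmp_assoc qtyp_eqs)
  also have "\<dots> = (-1) \<odot> ((qCap \<otimes> qId 2) \<cdot> (qId 1 \<otimes> rep2 a \<otimes> qId 1) \<cdot> (qId 3 \<otimes> qX) \<cdot> (qId 2 \<otimes> qCup))"
    by (simp add: qId_tns_dot_cup q_cmp_sm_r qtyp_eqs)
  also have "(qCap \<otimes> qId 2) \<cdot> (qId 1 \<otimes> rep2 a \<otimes> qId 1) \<cdot> (qId 3 \<otimes> qX) \<cdot> (qId 2 \<otimes> qCup)
      = (?V \<otimes> qId 1) \<cdot> (qId 3 \<otimes> qX) \<cdot> (qId 2 \<otimes> qCup)"
    by (rule q_cmp_assoc_eq[OF cap_tns_qId_cmp]) (simp_all add: qtyp_eqs)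
  also have "\<dots> = (qId 1 \<otimes> qX) \<cdot> (?V \<otimes> qId 1) \<cdot> (qId 2 \<otimes> qCup)"
    by (rule q_cmp_assoc_eq2[OF slide]) (simp_all add: qtyp_eqs)
  also have "\<dots> = (qId 1 \<otimes> qX) \<cdot> rep2 (rotate a)"
    by (simp only: rot)
  finally show "rep2 (rotate (a * x2)) = rep2 (- (x2 * rotate a))"
    by (simp add: rep2_neg rep2_mult rep2_x2)
qed

lemma rotate_tau: "rotate tau = tau"
  by (rule rep2_eqI) (simp add: rep2_rotate rep2_tau rotate_tau_rep)

lemma rotate_one: "rotate 1 = (cupcap :: 'k::field end2)"
proof (rule rep2_eqI)
  have "(qCap \<otimes> qId 2) \<cdot> (qId 1 \<otimes> qId 2 \<otimes> qId 1) \<cdot> (qId 2 \<otimes> qCup) = (qCap \<otimes> qId 2) \<cdot> (qId 2 \<otimes> (qCup :: 'k mor))"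
    by (simp add: q_tns_id q_cmp_id_l qtyp_eqs)
  also have "\<dots> = (qCap \<cdot> qId 2) \<otimes> (qId 2 \<cdot> qCup)"
    by (rule q_interchange[symmetric]) simp_all
  also have "\<dots> = qCap \<otimes> qCup" by (simp add: q_cmp_id_l q_cmp_id_r)
  also have "\<dots> = (qId 0 \<otimes> qCup) \<cdot> (qCap \<otimes> qId 0)" by (rule q_tns_via_left) simp_all
  also have "\<dots> = qCup \<cdot> qCap" by (simp add: q_tns_unit_l q_tns_unit_r)
  finally show "rep2 (rotate 1) = rep2 (cupcap :: 'k end2)" by (simp add: rep2_rotate rep2_one rep2_cupcap)
qed

lemma rotate_cupcap: "rotate cupcap = (1 :: 'k::field end2)"
proof (rule rep2_eqI)
  have "qId 1 \<otimes> (qCup \<cdot> qCap) \<otimes> qId 1 = (qId 1 \<otimes> qCup \<otimes> qId 1) \<cdot> (qId 1 \<otimes> qCap \<otimes> (qId 1 :: 'k mor))"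
    by (simp add: q_whisker_left q_whisker_right qtyp_eqs)
  then have "(qCap \<otimes> qId 2) \<cdot> (qId 1 \<otimes> (qCup \<cdot> qCap) \<otimes> qId 1) \<cdot> (qId 2 \<otimes> qCup)
     = ((qCap \<otimes> qId 2) \<cdot> (qId 1 \<otimes> qCup \<otimes> qId 1)) \<cdot> ((qId 1 \<otimes> qCap \<otimes> qId 1) \<cdot> (qId 2 \<otimes> (qCup :: 'k mor)))"
    by (simp add: q_cmp_assoc qtyp_eqs)
  also have "\<dots> = qId 2" by (simp add: qId_tns_zigzag1 zigzag1_tns_qId q_cmp_id_l)
  finally show "rep2 (rotate cupcap) = rep2 (1 :: 'k end2)" by (simp add: rep2_rotate rep2_one rep2_cupcap)
qed

lemma dot_slide_end2: "x1 * tau - tau * x2 = 1 - (cupcap :: 'k::field end2)"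
  by (rule rep2_eqI) (simp add: rep2_diff rep2_mult rep2_x1 rep2_x2 rep2_tau rep2_cupcap rep2_one q_dot_slide[unfolded q_tns_id one_add_one])

lemma rotate_x1_tau: "rotate (x1 * tau) = - (tau * (x1 :: 'k::field end2))"
  by (simp add: rotate_x1_mult rotate_tau)

lemma rotate_tau_x2: "rotate (tau * x2) = - (x2 * (tau :: 'k::field end2))"
  by (simp add: rotate_mult_x2 rotate_tau)

lemma dot_slide_rotated: "tau * x1 - x2 * tau = 1 - (cupcap :: 'k::field end2)"
proof -
  have "rotate (x1 * tau - tau * x2) = rotate (1 - (cupcap :: 'k end2))" by (simp only: dot_slide_end2)
  then have "- (tau * x1) + x2 * tau = cupcap - (1 :: 'k end2)"
    by (simp add: rotate_diff rotate_x1_tau rotate_tau_x2 rotate_one rotate_cupcap)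
  then show ?thesis by (simp add: algebra_simps)
qed

lemma x1_x2_commute: "x1 * x2 = x2 * (x1 :: 'k::field end2)"
proof (rule rep2_eqI)
  have "(qX \<otimes> qId 1) \<cdot> (qId 1 \<otimes> qX) = qX \<otimes> (qX :: 'k mor)"
    by (subst q_tns_via_right[of qX 1 1 qX 1 1]) simp_all
  moreover have "(qId 1 \<otimes> qX) \<cdot> (qX \<otimes> qId 1) = qX \<otimes> (qX :: 'k mor)"
    by (subst q_tns_via_left[of qX 1 1 qX 1 1]) simp_all
  ultimately show "rep2 (x1 * x2) = rep2 (x2 * (x1 :: 'k end2))"
    by (simp add: rep2_mult rep2_x1 rep2_x2)
qed

definition esym1 :: "'k::field end2" where "esym1 = x1 + x2"

definition esym2 :: "'k::field end2" where "esym2 = x1 * x2"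

lemma tau_esym1: "tau * esym1 = esym1 * (tau :: 'k::field end2)"
proof -
  have a: "tau * x1 = x2 * tau + (1 - (cupcap :: 'k end2))" using dot_slide_rotated by (simp add: algebra_simps)
  have b: "x1 * tau = tau * x2 + (1 - (cupcap :: 'k end2))" using dot_slide_end2 by (simp add: algebra_simps)
  show ?thesis by (simp add: esym1_def algebra_simps a b)
qed

lemma tau_esym2: "tau * esym2 = esym2 * tau + x2 * cupcap - cupcap * (x2 :: 'k::field end2)"
proof -
  have a: "tau * x1 = x2 * tau + (1 - (cupcap :: 'k end2))" using dot_slide_rotated by (simp add: algebra_simps)
  have b: "tau * x2 = x1 * tau - (1 - (cupcap :: 'k end2))" by (simp add: dot_slide_end2[symmetric])
  have "tau * esym2 = (tau * x1) * (x2 :: 'k end2)" by (simp add: esym2_def mult.assoc)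
  also have "\<dots> = x2 * (tau * x2) + (1 - cupcap) * x2" by (simp only: a) (simp add: algebra_simps)
  also have "\<dots> = x2 * x1 * tau - x2 * (1 - cupcap) + (1 - cupcap) * x2" by (simp only: b) (simp add: algebra_simps)
  also have "\<dots> = esym2 * tau + x2 * cupcap - cupcap * x2" by (simp add: esym2_def x1_x2_commute algebra_simps)
  finally show ?thesis .
qed

definition cap_null :: "'k::field end2 \<Rightarrow> bool" where "cap_null B \<longleftrightarrow> qCap \<cdot> rep2 B = qZero 2 0"

definition cup_null :: "'k::field end2 \<Rightarrow> bool" where "cup_null B \<longleftrightarrow> rep2 B \<cdot> qCup = qZero 0 2"

lemma qCap_rep2_mult: "qCap \<cdot> rep2 (a * b) = (qCap \<cdot> rep2 a) \<cdot> rep2 b"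
  by (simp add: rep2_mult q_cmp_assoc qtyp_eqs)

lemma cap_null_mult_right: "cap_null B \<Longrightarrow> cap_null (B * y)"
  by (simp add: cap_null_def qCap_rep2_mult q_cmp_qZero_l)

lemma qCap_rep2_x2: "qCap \<cdot> rep2 (x2 * y) = (-1) \<odot> (qCap \<cdot> rep2 (x1 * y))"
  by (simp add: qCap_rep2_mult rep2_x1 rep2_x2 q_cap_dot q_cmp_sm_l qtyp_eqs)

lemma cap_null_esym1_mult: "cap_null (esym1 * y)"
proof -
  have "qCap \<cdot> rep2 (esym1 * y) = (qCap \<cdot> rep2 (x1 * y)) \<oplus> (qCap \<cdot> rep2 (x2 * y))"
    by (simp add: esym1_def distrib_right rep2_add q_cmp_add_r[where n=2 and m=2 and p=0])
  also have "\<dots> = qZero 2 0" by (simp add: qCap_rep2_x2 q_add_neg qtyp_eqs)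
  finally show ?thesis by (simp add: cap_null_def)
qed

lemma cap_null_add: "cap_null a \<Longrightarrow> cap_null b \<Longrightarrow> cap_null (a + b)"
  by (simp add: cap_null_def rep2_add q_cmp_add_r[where n=2 and m=2 and p=0] q_add_zero)

lemma cap_null_neg: "cap_null a \<Longrightarrow> cap_null (- a)"
  by (simp add: cap_null_def rep2_neg q_cmp_sm_r[where n=2 and m=2 and p=0] q_sm_qZero)

lemma cap_null_diff: "cap_null a \<Longrightarrow> cap_null b \<Longrightarrow> cap_null (a - b)"
  using cap_null_add[of a "- b"] cap_null_neg[of b] by simp

lemma cap_null_scale: "cap_null a \<Longrightarrow> cap_null (scale c a)"
  by (simp add: cap_null_def rep2_scale q_cmp_sm_r[where n=2 and m=2 and p=0] q_sm_qZero)

lemma cup_null_mult_left: "cup_null B \<Longrightarrow> cup_null (y * B)"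
  by (simp add: cup_null_def rep2_mult q_cmp_assoc qtyp_eqs q_cmp_qZero_r)

lemma cup_null_add: "cup_null a \<Longrightarrow> cup_null b \<Longrightarrow> cup_null (a + b)"
  by (simp add: cup_null_def rep2_add q_cmp_add_l[where n=2 and m=2 and p=0] q_add_zero)

lemma cup_null_neg: "cup_null a \<Longrightarrow> cup_null (- a)"
  by (simp add: cup_null_def rep2_neg q_cmp_sm_l[where n=2 and m=2 and p=0] q_sm_qZero)

lemma cup_null_diff: "cup_null a \<Longrightarrow> cup_null b \<Longrightarrow> cup_null (a - b)"
  using cup_null_add[of a "- b"] cup_null_neg[of b] by simp

lemma cup_null_scale: "cup_null a \<Longrightarrow> cup_null (scale c a)"
  by (simp add: cup_null_def rep2_scale q_cmp_sm_l[where n=2 and m=2 and p=0] q_sm_qZero)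

lemma cup_null_esym1: "cup_null esym1"
proof -
  have "rep2 esym1 \<cdot> qCup = ((qX \<otimes> qId 1) \<cdot> qCup) \<oplus> ((qId 1 \<otimes> qX) \<cdot> (qCup :: 'k::field mor))"
    by (simp add: esym1_def rep2_add rep2_x1 rep2_x2 q_cmp_add_l[where n=2 and m=2 and p=0] qtyp_eqs)
  also have "\<dots> = qZero 0 2"
    by (simp add: dot_cup_slide q_add_comm[where n=0 and m=2] q_add_neg qtyp_eqs)
  finally show ?thesis by (simp add: cup_null_def)
qed

lemma cupcap_mult_cap_null: "cap_null B \<Longrightarrow> cupcap * B = 0"
  by (rule rep2_eqI) (simp add: cap_null_def rep2_mult rep2_cupcap q_cmp_assoc qtyp_eqs q_cmp_qZero_r rep2_zero)

lemma cap_null_x2_mult: "cap_null (x1 * y) \<Longrightarrow> cap_null (x2 * y)"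
  by (simp add: cap_null_def qCap_rep2_x2 q_sm_qZero)

definition central_null :: "'k::field end2 \<Rightarrow> bool" where
  "central_null M \<longleftrightarrow> tau * M = M * tau \<and> cap_null M \<and> cup_null M"

lemma central_null_esym1: "central_null esym1"
  using cap_null_esym1_mult[of 1] by (simp add: central_null_def tau_esym1 cup_null_esym1)

lemma central_null_scale: "central_null M \<Longrightarrow> central_null (scale c M)"
  by (simp add: central_null_def scale_mult_left scale_mult_right cap_null_scale cup_null_scale)

lemma central_null_esym1_mult:
  assumes "central_null M"
  shows "central_null (esym1 * M)"
proof -
  have "tau * (esym1 * M) = esym1 * (tau * M)"
    by (simp add: tau_esym1 flip: mult.assoc)
  then show ?thesis
    using assms by (simp add: central_null_def cap_null_esym1_mult cup_null_mult_left mult.assoc)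
qed

text \<open>The terms of \<open>\<tau> e\<^sub>2\<close> involving \<open>\<union>\<circ>\<inter>\<close> are killed because \<open>B\<close> is annihilated by the cap.\<close>

lemma central_null_rec:
  assumes A: "central_null A" and B: "central_null B" and B_x1: "x1 * B = B * x1"
  shows "central_null (esym1 * A - esym2 * B)"
proof -
  have x1B: "cap_null (x1 * B)"
    using B by (simp add: B_x1 central_null_def cap_null_mult_right)
  have x2B: "cap_null (x2 * B)" using x1B by (rule cap_null_x2_mult)
  have "x1 * (x1 * B) = (x1 * B) * x1" by (metis B_x1 mult.assoc)
  then have "cap_null (x2 * (x1 * B))" using x1B by (simp add: cap_null_x2_mult cap_null_mult_right)
  then have e2B: "cap_null (esym2 * B)" by (simp add: esym2_def x1_x2_commute mult.assoc)
  have TA: "tau * A = A * tau" and TB: "tau * B = B * tau" and cB: "cupcap * B = 0"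
    using A B by (simp_all add: central_null_def cupcap_mult_cap_null)
  have "tau * (esym1 * A - esym2 * B) = (tau * esym1) * A - (tau * esym2) * B"
    by (simp add: algebra_simps)
  also have "\<dots> = esym1 * (tau * A) - (esym2 * tau + x2 * cupcap - cupcap * x2) * B"
    by (simp add: tau_esym1 tau_esym2 mult.assoc)
  also have "\<dots> = esym1 * (tau * A) - esym2 * (tau * B) - x2 * (cupcap * B) + cupcap * (x2 * B)"
    by (simp add: algebra_simps)
  also have "\<dots> = (esym1 * A - esym2 * B) * tau"
    by (simp add: cB cupcap_mult_cap_null[OF x2B] TA TB algebra_simps)
  finally show ?thesis
    using A B e2B
    by (simp add: central_null_def cap_null_diff cap_null_esym1_mult cup_null_diff cup_null_mult_left)
qed

definition mono2 :: "nat \<Rightarrow> nat \<Rightarrow> 'k::field end2" where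
  "mono2 a b = x1 ^ a * x2 ^ b"

lemma x2_x1_pow_commute: "x2 * x1 ^ a = x1 ^ a * (x2 :: 'k::field end2)"
proof (induction a)
  case 0
  then show ?case by simp
next
  case (Suc a)
  have "x2 * x1 ^ Suc a = (x2 * x1) * (x1 :: 'k end2) ^ a" by (simp add: mult.assoc)
  also have "\<dots> = x1 * (x2 * x1 ^ a)" by (simp only: x1_x2_commute[symmetric] mult.assoc)
  also have "\<dots> = x1 ^ Suc a * x2" by (simp add: Suc mult.assoc)
  finally show ?case .
qed

lemma x2_pow_x1_commute: "x2 ^ b * x1 = x1 * (x2 :: 'k::field end2) ^ b"
proof (induction b)
  case 0
  then show ?case by simp
next
  case (Suc b)
  have "x2 ^ Suc b * x1 = x2 * ((x2 :: 'k end2) ^ b * x1)" by (simp add: mult.assoc)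
  also have "\<dots> = (x2 * x1) * x2 ^ b" by (simp add: Suc mult.assoc)
  also have "\<dots> = x1 * x2 ^ Suc b" by (simp only: x1_x2_commute[symmetric] mult.assoc power_Suc)
  finally show ?case .
qed

lemma x1_mono2: "x1 * mono2 a b = (mono2 (Suc a) b :: 'k::field end2)"
  by (simp add: mono2_def mult.assoc)

lemma x2_mono2: "x2 * mono2 a b = (mono2 a (Suc b) :: 'k::field end2)"
  by (simp add: mono2_def mult.assoc[symmetric] x2_x1_pow_commute)

lemma mono2_x1_commute: "mono2 a b * x1 = x1 * (mono2 a b :: 'k::field end2)"
proof -
  have "mono2 a b * x1 = x1 ^ a * (x2 ^ b * (x1 :: 'k end2))" by (simp add: mono2_def mult.assoc)
  also have "\<dots> = x1 ^ a * x1 * x2 ^ b" by (simp add: x2_pow_x1_commute mult.assoc)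
  also have "\<dots> = x1 * mono2 a b" by (simp add: mono2_def power_commutes mult.assoc)
  finally show ?thesis .
qed

definition hpoly2 :: "nat \<Rightarrow> (nat \<Rightarrow> 'k) \<Rightarrow> 'k::field end2" where
  "hpoly2 r f = (\<Sum>a\<in>{..r}. scale (f a) (mono2 a (r - a)))"

lemma hpoly2_cong: "(\<And>a. a \<le> r \<Longrightarrow> f a = g a) \<Longrightarrow> hpoly2 r f = hpoly2 r g"
  by (simp add: hpoly2_def)

lemma hpoly2_add: "hpoly2 r f + hpoly2 r g = hpoly2 r (\<lambda>a. f a + g a)"
  by (simp add: hpoly2_def sum.distrib scale_add_scalar)

lemma hpoly2_diff: "hpoly2 r f - hpoly2 r g = hpoly2 r (\<lambda>a. f a - g a)"
  by (simp add: hpoly2_def sum_subtractf scale_diff_scalar)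

lemma x1_hpoly2: "x1 * hpoly2 r f = hpoly2 (Suc r) (\<lambda>a. if a = 0 then 0 else f (a - 1))"
proof -
  have "x1 * hpoly2 r f = (\<Sum>a\<in>{..r}. scale (f a) (mono2 (Suc a) (r - a)))"
    by (simp add: hpoly2_def sum_distrib_left scale_mult_right x1_mono2)
  also have "\<dots> = hpoly2 (Suc r) (\<lambda>a. if a = 0 then 0 else f (a - 1))"
    by (simp only: hpoly2_def sum.atMost_Suc_shift) simp
  finally show ?thesis .
qed

lemma x2_hpoly2: "x2 * hpoly2 r f = hpoly2 (Suc r) (\<lambda>a. if a = Suc r then 0 else f a)"
proof -
  have "x2 * hpoly2 r f = (\<Sum>a\<in>{..r}. scale (f a) (mono2 a (Suc (r - a))))"
    by (simp add: hpoly2_def sum_distrib_left scale_mult_right x2_mono2)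
  also have "\<dots> = hpoly2 (Suc r) (\<lambda>a. if a = Suc r then 0 else f a)"
    by (simp add: hpoly2_def Suc_diff_le)
  finally show ?thesis .
qed

lemma hpoly2_x1_commute: "hpoly2 r f * x1 = x1 * hpoly2 r f"
  by (simp add: hpoly2_def sum_distrib_left sum_distrib_right scale_mult_right scale_mult_left mono2_x1_commute)

definition qend2 :: "nat \<Rightarrow> 'k::field end2" where
  "qend2 r = hpoly2 r (\<lambda>a. qcoeff a * qcoeff (r - a))"

lemma qend2_0: "qend2 0 = 1"
  by (simp add: qend2_def hpoly2_def qcoeff_def mono2_def)

lemma mono2_0_1: "mono2 0 (Suc 0) = (x2 :: 'k::field end2)" and mono2_1_0: "mono2 (Suc 0) 0 = (x1 :: 'k::field end2)"
  unfolding mono2_def by simp_all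

lemma qend2_1: "qend2 1 = scale 2 (esym1 :: 'k::field end2)"
  by (simp add: qend2_def hpoly2_def qcoeff_def mono2_0_1 mono2_1_0 esym1_def scale_add One_nat_def add.commute)

lemma esym1_hpoly2: "esym1 * hpoly2 r f = hpoly2 (Suc r) (\<lambda>a. (if a = 0 then 0 else f (a - 1)) + (if a = Suc r then 0 else f a))"
  by (simp add: esym1_def distrib_right x1_hpoly2 x2_hpoly2 hpoly2_add)

lemma esym2_hpoly2: "esym2 * hpoly2 r f = hpoly2 (Suc (Suc r)) (\<lambda>a. if a = 0 then 0 else (if a - 1 = Suc r then 0 else f (a - 1)))"
  by (simp add: esym2_def mult.assoc x2_hpoly2 x1_hpoly2)

lemma qend2_2: "qend2 2 = esym1 * qend2 1"
  unfolding qend2_def esym1_hpoly2 numeral_2_eq_2 One_nat_def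
  by (rule hpoly2_cong) (auto simp: qcoeff_def le_Suc_eq)

lemma qend2_rec: "1 \<le> r \<Longrightarrow> qend2 (Suc (Suc r)) = esym1 * qend2 (Suc r) - esym2 * qend2 r"
  unfolding qend2_def esym1_hpoly2 esym2_hpoly2 hpoly2_diff
  by (rule hpoly2_cong) (auto simp: qcoeff_def)

lemma qend2_x1_commute: "x1 * qend2 r = qend2 r * x1"
  by (simp add: qend2_def hpoly2_x1_commute)

lemma central_null_qend2_Suc:
  "central_null (qend2 (Suc r) :: 'k::field end2) \<and> central_null (qend2 (Suc (Suc r)) :: 'k end2)"
proof (induction r)
  case 0
  have one: "central_null (qend2 1 :: 'k end2)"
    by (simp add: qend2_1 central_null_scale central_null_esym1)
  then have "central_null (qend2 2 :: 'k end2)"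
    unfolding qend2_2 by (rule central_null_esym1_mult)
  with one show ?case
    by (simp add: numeral_2_eq_2 One_nat_def)
next
  case (Suc r)
  then show ?case
    by (simp add: qend2_rec central_null_rec qend2_x1_commute)
qed

lemma central_null_qend2: "0 < r \<Longrightarrow> central_null (qend2 r)"
  by (cases r) (simp_all add: central_null_qend2_Suc)

lemma rep2_x1_pow: "rep2 ((x1 :: 'k::field end2) ^ a) = qXpow a \<otimes> qId 1"
proof (induction a)
  case 0
  then show ?case by (simp add: rep2_one q_tns_id)
next
  case (Suc a)
  have "rep2 ((x1 :: 'k end2) ^ Suc a) = (qX \<otimes> qId 1) \<cdot> (qXpow a \<otimes> qId 1)"
    by (simp add: rep2_mult rep2_x1 Suc)
  also have "\<dots> = (qX \<cdot> qXpow a) \<otimes> (qId 1 \<cdot> qId 1)"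
    by (rule q_interchange[symmetric]) simp_all
  finally show ?case by (simp add: q_cmp_id_l)
qed

lemma rep2_x2_pow: "rep2 ((x2 :: 'k::field end2) ^ a) = qId 1 \<otimes> qXpow a"
proof (induction a)
  case 0
  then show ?case by (simp add: rep2_one q_tns_id)
next
  case (Suc a)
  have "rep2 ((x2 :: 'k end2) ^ Suc a) = (qId 1 \<otimes> qX) \<cdot> (qId 1 \<otimes> qXpow a)"
    by (simp add: rep2_mult rep2_x2 Suc)
  also have "\<dots> = (qId 1 \<cdot> qId 1) \<otimes> (qX \<cdot> qXpow a)"
    by (rule q_interchange[symmetric]) simp_all
  finally show ?case by (simp add: q_cmp_id_l)
qed

lemma rep2_mono2: "rep2 (mono2 a b :: 'k::field end2) = qXpow a \<otimes> qXpow b"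
proof -
  have "rep2 (mono2 a b :: 'k end2) = (qXpow a \<otimes> qId 1) \<cdot> (qId 1 \<otimes> qXpow b)"
    by (simp add: mono2_def rep2_mult rep2_x1_pow rep2_x2_pow)
  also have "\<dots> = (qXpow a \<cdot> qId 1) \<otimes> (qId 1 \<cdot> qXpow b)"
    by (rule q_interchange[symmetric]) simp_all
  finally show ?thesis by (simp add: q_cmp_id_l q_cmp_id_r)
qed

lemma qQ_2: "qQ r 2 = rep2 (qend2 r :: 'k::field end2)"
proof -
  have "rep2 (qend2 r :: 'k end2) = qsum 2 2 (\<lambda>a. (qcoeff a * qcoeff (r - a)) \<odot> (qXpow a \<otimes> qXpow (r - a))) {..r}"
    by (simp add: qend2_def hpoly2_def rep2_sum rep2_scale rep2_mono2)
  also have "\<dots> = qsum 2 2 (\<lambda>a. qcoeff (r - a) \<odot> (qQ a 1 \<otimes> qXpow (r - a))) {..r}"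
    by (rule qsum_cong) (simp add: qQ_1 q_tns_sm_l q_sm_sm qtyp_tns mult.commute)
  also have "\<dots> = qQ r 2"
    by (simp only: Suc_1[symmetric] qQ.simps(2))
  finally show ?thesis by simp
qed

section \<open>Centrality\<close>

lemma qQ_X_commute: "qQ r 1 \<cdot> qX = qX \<cdot> (qQ r 1 :: 'k::field mor)"
proof -
  have "qQ r 1 \<cdot> qX = qcoeff r \<odot> (qXpow r \<cdot> (qX :: 'k mor))" by (simp add: qQ_1 q_cmp_sm_l)
  also have "\<dots> = qcoeff r \<odot> (qX \<cdot> qXpow r)" by (simp add: qX_qXpow_commute)
  also have "\<dots> = qX \<cdot> qQ r 1" by (simp add: qQ_1 q_cmp_sm_r)
  finally show ?thesis .
qed

lemma qQ_Tau_commute: "qQ r 2 \<cdot> qTau = qTau \<cdot> (qQ r 2 :: 'k::field mor)"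
proof -
  have "(qend2 r :: 'k end2) * tau = tau * qend2 r"
  proof (cases "r = 0")
    case True
    then show ?thesis by (simp add: qend2_0)
  next
    case False
    then have "central_null (qend2 r :: 'k end2)" by (intro central_null_qend2) simp
    then show ?thesis by (simp add: central_null_def)
  qed
  then have "rep2 ((qend2 r :: 'k end2) * tau) = rep2 (tau * qend2 r)" by simp
  then show ?thesis by (simp add: qQ_2 rep2_mult rep2_tau)
qed

lemma qQ_Cap_commute: "qQ r 0 \<cdot> qCap = qCap \<cdot> (qQ r 2 :: 'k::field mor)"
proof (cases "r = 0")
  case True
  then show ?thesis by (simp add: qQ_2 qend2_0 rep2_one q_cmp_id_l q_cmp_id_r)
next
  case False
  then have "central_null (qend2 r :: 'k end2)" by (intro central_null_qend2) simp
  then have "cap_null (qend2 r :: 'k end2)" by (simp add: central_null_def)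
  then show ?thesis using False by (simp add: qQ_2 cap_null_def q_cmp_qZero_l)
qed

lemma qQ_Cup_commute: "qQ r 2 \<cdot> qCup = qCup \<cdot> (qQ r 0 :: 'k::field mor)"
proof (cases "r = 0")
  case True
  then show ?thesis by (simp add: qQ_2 qend2_0 rep2_one q_cmp_id_l q_cmp_id_r)
next
  case False
  then have "central_null (qend2 r :: 'k end2)" by (intro central_null_qend2) simp
  then have "cup_null (qend2 r :: 'k end2)" by (simp add: central_null_def)
  then show ?thesis using False by (simp add: qQ_2 cup_null_def q_cmp_qZero_r)
qed

lemma qQ_cmp_commute:
  assumes f: "qhom n k f" and g: "qhom k m g"
    and f_comm: "qQ r k \<cdot> f = f \<cdot> qQ r n" and g_comm: "qQ r m \<cdot> g = g \<cdot> qQ r k"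
  shows "qQ r m \<cdot> (g \<cdot> f) = (g \<cdot> f) \<cdot> qQ r n"
proof -
  have "qQ r m \<cdot> (g \<cdot> f) = (qQ r m \<cdot> g) \<cdot> f"
    using f g by (simp add: q_cmp_assoc)
  also have "\<dots> = g \<cdot> (qQ r k \<cdot> f)"
    using f g by (simp add: g_comm q_cmp_assoc)
  also have "\<dots> = (g \<cdot> f) \<cdot> qQ r n"
    using f g by (simp add: f_comm q_cmp_assoc)
  finally show ?thesis .
qed

lemma qQ_tns_commute:
  assumes f: "qhom a b f" and g: "qhom c d g"
    and f_comm: "\<And>r. qQ r b \<cdot> f = f \<cdot> qQ r a" and g_comm: "\<And>r. qQ r d \<cdot> g = g \<cdot> qQ r c"
  shows "qQ r (b + d) \<cdot> (f \<otimes> g) = (f \<otimes> g) \<cdot> qQ r (a + c)"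
proof -
  have "(qQ i b \<otimes> qQ (r - i) d) \<cdot> (f \<otimes> g) = (f \<otimes> g) \<cdot> (qQ i a \<otimes> qQ (r - i) c)" for i
  proof -
    have "(qQ i b \<otimes> qQ (r - i) d) \<cdot> (f \<otimes> g) = (qQ i b \<cdot> f) \<otimes> (qQ (r - i) d \<cdot> g)"
      using f g by (intro q_interchange[symmetric]) simp_all
    also have "\<dots> = (f \<cdot> qQ i a) \<otimes> (g \<cdot> qQ (r - i) c)"
      by (simp only: f_comm g_comm)
    also have "\<dots> = (f \<otimes> g) \<cdot> (qQ i a \<otimes> qQ (r - i) c)"
      using f g by (intro q_interchange) simp_all
    finally show ?thesis .
  qed
  then show ?thesis
    using f g by (simp add: qQ_tns_split qsum_cmp_r qsum_cmp_l qtyp_tns)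
qed

lemma qQ_central: "nbtyp f = Some (n, m) \<Longrightarrow> qQ r m \<cdot> abs_mor f = abs_mor f \<cdot> (qQ r n :: 'k::field mor)"
proof (induction f arbitrary: n m r)
  case (Idn k)
  then show ?case by (auto simp: abs_mor_simps q_cmp_id_l q_cmp_id_r)
next
  case X
  then show ?case by (auto simp: abs_mor_simps qQ_X_commute)
next
  case Tau
  then show ?case by (auto simp: abs_mor_simps qQ_Tau_commute)
next
  case Cap
  then show ?case by (auto simp: abs_mor_simps qQ_Cap_commute simp del: qQ.simps)
next
  case Cup
  then show ?case by (auto simp: abs_mor_simps qQ_Cup_commute simp del: qQ.simps)
next
  case (Cmp g f)
  then obtain k where f: "nbtyp f = Some (n, k)" and g: "nbtyp g = Some (k, m)"
    by (auto split: option.splits prod.splits if_splits)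
  then show ?case
    using Cmp.IH(1)[OF g] Cmp.IH(2)[OF f] by (simp add: abs_mor_simps qQ_cmp_commute qtyp_abs_mor)
next
  case (Tns f g)
  then obtain a b c d where f: "nbtyp f = Some (a, b)" and g: "nbtyp g = Some (c, d)"
      and "n = a + c" "m = b + d"
    by (auto split: option.splits prod.splits if_splits)
  then show ?case
    using Tns.IH(1)[OF f] Tns.IH(2)[OF g] by (simp add: abs_mor_simps qQ_tns_commute qtyp_abs_mor)
next
  case (Zero k l)
  then show ?case by (simp add: abs_mor_simps q_cmp_qZero_l q_cmp_qZero_r)
next
  case (Add f g)
  then have "nbtyp f = Some (n, m)" and "nbtyp g = Some (n, m)"
    by (auto split: if_splits)
  then show ?case
    using Add.IH by (simp add: abs_mor_simps qtyp_abs_mor q_cmp_add_r[where n=n and m=m] q_cmp_add_l[where n=n and m=m])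
next
  case (Sm c f)
  then show ?case
    by (simp add: abs_mor_simps qtyp_abs_mor q_cmp_sm_r q_cmp_sm_l)
qed

theorem theorem3p8:
  fixes t :: "'k::field"
  assumes char: "(2::'k) \<noteq> 0"
    and t01: "t = 0 \<or> t = 1"
  shows "\<forall>r n m (f :: 'k nbmor). nbhom n m f \<longrightarrow>
           nbeq t (Cmp (polyact m (qpoly r m)) f) (Cmp f (polyact n (qpoly r n)))"
proof (intro allI impI)
  fix r n m and f :: "'k nbmor"
  assume "nbhom n m f"
  then have f: "nbtyp f = Some (n, m)" by (simp add: nbhom_def)
  have "abs_mor (Cmp (polyact m (qpoly r m)) f) = abs_mor (Cmp f (polyact n (qpoly r n)))"
    by (simp add: abs_mor_simps abs_mor_polyact_qpoly qQ_central[OF f])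
  then have "nbeq_all (Cmp (polyact m (qpoly r m)) f) (Cmp f (polyact n (qpoly r n)))"
    by (simp add: mor.abs_eq_iff)
  then show "nbeq t (Cmp (polyact m (qpoly r m)) f) (Cmp f (polyact n (qpoly r n)))"
    by (simp add: nbeq_all_def)
qed

end
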